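(* Let $X$ be a compact Hausdorff space, $\alpha\colon X\to X$ continuous, $\delta f=f\circ\alpha$ on $C(X)$, and $A\colon C(X)\to C(X)$ a transfer operator for $(X,\alpha)$. Then for every $\mu\in M(X)$ and every $\varepsilon>0$ there exist a neighborhood $O(\mu)$ of $\mu$ in the weak$^*$ topology, a number $C(\varepsilon,\mu)$, and a sequence of functions $\chi_n\in C(X)$ with $\chi_n\ge$ the indicator function of $X_n(O(\mu))$ for all $n$, such that for all $n\in\mathbb N$ \[ \|A^n\chi_n\|\le C(\varepsilon,\mu)\,e^{n(\tau(\mu)+\varepsilon)}, \] where, if $\tau(\mu)=-\infty$, the number $\tau(\mu)+\varepsilon$ is replaced by $-1/\varepsilon$.
   Context: $C(X)$ is the space of real continuous functions with the supremum norm; $\mathbf 1$ is the constant function $1$. A transfer operator for $(X,\alpha)$ is a positive linear operator $A\colon C(X)\to C(X)$ with $A((f\circ\alpha)g)=f\,Ag$ for all $f,g\in C(X)$. $M(X)$ is the set of Borel probability measures on $X$ (regular, identified with positive normalized functionals on $C(X)$), with the weak$^*$ topology; $M_\delta$ denotes the $\alpha$-invariant ones ($\mu[f\circ\alpha]=\mu[f]$ for all $f$). For $x\in X$ the empirical measure is $\delta_{x,n}(f)=\frac1n\sum_{i=0}^{n-1}f(\alpha^i(x))$, and $X_n(O(\mu))=\{x\in X:\delta_{x,n}\in O(\mu)\}$. The $t$-entropy: a partition of unity is a finite set $D$ of nonnegative functions in $C(X)$ summing to $\mathbf 1$; for $\mu\in M_\delta$, $\tau_n(\mu,D)=\sup_{m\in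 M(X)}\sum_{g\in D}\mu[g]\ln\frac{m[A^ng]}{\mu[g]}$ (summands with $\mu[g]=0$ are $0$, $\ln0=-\infty$), $\tau(\mu)=\inf_{n\in\mathbb N}\frac1n\inf_D\tau_n(\mu,D)$, with $\tau(\mu)=-\infty$ if some $g\in D$ has $A^ng=0$ and $\mu[g]>0$; for $\mu\in M(X)\setminus M_\delta$ one sets $\tau(\mu)=-\infty$. *)

theory Defs
  imports "HOL-Analysis.Analysis"
begin

text \<open>The space X is a type of class t2_space with compact UNIV.
  C(X) = real continuous functions; measures in M(X) are represented as
  positive normalized linear functionals on C(X).\<close>

definition CX :: "('a::topological_space \<Rightarrow> real) set" where
  "CX = {f. continuous_on UNIV f}"

definition supnorm :: "('a \<Rightarrow> real) \<Rightarrow> real" where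
  "supnorm f = (SUP x. \<bar>f x\<bar>)"

definition transfer_operator ::
  "('a::topological_space \<Rightarrow> 'a) \<Rightarrow> (('a \<Rightarrow> real) \<Rightarrow> ('a \<Rightarrow> real)) \<Rightarrow> bool" where
  "transfer_operator \<alpha> A \<longleftrightarrow>
     (\<forall>f\<in>CX. A f \<in> CX) \<and>
     (\<forall>f\<in>CX. \<forall>g\<in>CX. A (\<lambda>x. f x + g x) = (\<lambda>x. A f x + A g x)) \<and>
     (\<forall>f\<in>CX. \<forall>c::real. A (\<lambda>x. c * f x) = (\<lambda>x. c * A f x)) \<and>
     (\<forall>f\<in>CX. (\<forall>x. 0 \<le> f x) \<longrightarrow> (\<forall>x. 0 \<le> A f x)) \<and>
     (\<forall>f\<in>CX. \<forall>g\<in>CX. A (\<lambda>x. f (\<alpha> x) * g x) = (\<lambda>x. f x * A g x))"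

definition prob_functional :: "(('a::topological_space \<Rightarrow> real) \<Rightarrow> real) \<Rightarrow> bool" where
  "prob_functional \<mu> \<longleftrightarrow>
     (\<forall>f\<in>CX. \<forall>g\<in>CX. \<mu> (\<lambda>x. f x + g x) = \<mu> f + \<mu> g) \<and>
     (\<forall>f\<in>CX. \<forall>c::real. \<mu> (\<lambda>x. c * f x) = c * \<mu> f) \<and>
     (\<forall>f\<in>CX. (\<forall>x. 0 \<le> f x) \<longrightarrow> 0 \<le> \<mu> f) \<and>
     \<mu> (\<lambda>x. 1) = 1"

definition MX :: "(('a::topological_space \<Rightarrow> real) \<Rightarrow> real) set" where
  "MX = {\<mu>. prob_functional \<mu>}"

definition invariant_functional ::
  "('a::topological_space \<Rightarrow> 'a) \<Rightarrow> (('a \<Rightarrow> real) \<Rightarrow> real) \<Rightarrow> bool" where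
  "invariant_functional \<alpha> \<mu> \<longleftrightarrow> \<mu> \<in> MX \<and> (\<forall>f\<in>CX. \<mu> (\<lambda>x. f (\<alpha> x)) = \<mu> f)"

definition weak_star_nhd ::
  "(('a::topological_space \<Rightarrow> real) \<Rightarrow> real) \<Rightarrow> ((('a \<Rightarrow> real) \<Rightarrow> real) set) \<Rightarrow> bool" where
  "weak_star_nhd \<mu> U \<longleftrightarrow>
     (\<exists>F e. finite F \<and> F \<subseteq> CX \<and> e > 0 \<and>
        {\<nu>\<in>MX. \<forall>f\<in>F. \<bar>\<nu> f - \<mu> f\<bar> < e} \<subseteq> U)"

definition empirical :: "('a \<Rightarrow> 'a) \<Rightarrow> 'a \<Rightarrow> nat \<Rightarrow> (('a \<Rightarrow> real) \<Rightarrow> real)" where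
  "empirical \<alpha> x n = (\<lambda>f. (\<Sum>i<n. f ((\<alpha> ^^ i) x)) / real n)"

definition Xn :: "('a \<Rightarrow> 'a) \<Rightarrow> nat \<Rightarrow> ((('a \<Rightarrow> real) \<Rightarrow> real) set) \<Rightarrow> 'a set" where
  "Xn \<alpha> n U = {x. empirical \<alpha> x n \<in> U}"

definition partition_of_unity :: "('a::topological_space \<Rightarrow> real) set \<Rightarrow> bool" where
  "partition_of_unity D \<longleftrightarrow> finite D \<and> D \<subseteq> CX \<and> (\<forall>g\<in>D. \<forall>x. 0 \<le> g x) \<and>
     (\<forall>x. (\<Sum>g\<in>D. g x) = 1)"

definition tau_summand :: "real \<Rightarrow> real \<Rightarrow> ereal" where
  "tau_summand a b = (if a = 0 then 0 else if b = 0 then -\<infinity> else ereal (a * ln (b / a)))"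

definition tau_n ::
  "(('a::topological_space \<Rightarrow> real) \<Rightarrow> ('a \<Rightarrow> real)) \<Rightarrow> (('a \<Rightarrow> real) \<Rightarrow> real) \<Rightarrow> nat
     \<Rightarrow> ('a \<Rightarrow> real) set \<Rightarrow> ereal" where
  "tau_n A \<mu> n D = (SUP m\<in>MX. \<Sum>g\<in>D. tau_summand (\<mu> g) (m ((A ^^ n) g)))"

definition t_entropy ::
  "('a::topological_space \<Rightarrow> 'a) \<Rightarrow> (('a \<Rightarrow> real) \<Rightarrow> ('a \<Rightarrow> real)) \<Rightarrow> (('a \<Rightarrow> real) \<Rightarrow> real) \<Rightarrow> ereal" where
  "t_entropy \<alpha> A \<mu> =
     (if invariant_functional \<alpha> \<mu>
      then (INF n\<in>{1..}. INF D\<in>{D. partition_of_unity D}. tau_n A \<mu> n D / ereal (real n))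
      else -\<infinity>)"

end

theory Submission
  imports Defs
begin

(* If tau(mu) < c, then tau_k(mu, D) < s < k c for some partition of unity D and some k.
   The supremum defining tau_k(mu, D) is a concave maximisation over measures m of
   sum_g mu[g] ln (m[A^k g] / mu[g]); a near-maximiser m, tested against the directions of point
   masses, gives weights w_g = ln (mu[g] / m[A^k g]) with
   sum_g e^(w_g) A^k g <= e^(s + sum_g mu[g] w_g).  By Jensen, phi = ln (sum_g e^(w_g) g) then
   satisfies A^k e^phi <= e^(s + mu[phi]), and the transfer identity iterates this to
   A^(jk) exp (sum_(i<j) phi o alpha^(ik)) <= e^(j (s + mu[phi])).  If the empirical measure of x is
   close to mu at phi, the Birkhoff sum of phi along alpha^k started at alpha^r x is at least about
   (n/k) mu[phi] for some r < k, so a multiple of the sum over r of these exponentiated Birkhoff sums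
   majorises the indicator of X_n(O(mu)), and its image under A^n grows at most like e^(n c).
   If mu is not invariant, asymptotic invariance of empirical measures makes X_n(O(mu)) empty for
   large n, so every rate c works. *)

section \<open>Positive functionals and operators on C(X)\<close>

lemma CX_const [simp]: "(\<lambda>x. c) \<in> CX"
  unfolding CX_def by (auto intro!: continuous_intros)

lemma CX_diff: "f \<in> CX \<Longrightarrow> g \<in> CX \<Longrightarrow> (\<lambda>x. f x - g x) \<in> CX"
  unfolding CX_def by (auto intro!: continuous_intros)

lemma CX_mult: "f \<in> CX \<Longrightarrow> g \<in> CX \<Longrightarrow> (\<lambda>x. f x * g x) \<in> CX"
  unfolding CX_def by (auto intro!: continuous_intros)

lemma CX_cmult: "f \<in> CX \<Longrightarrow> (\<lambda>x. c * f x) \<in> CX"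
  unfolding CX_def by (auto intro!: continuous_intros)

lemma CX_exp: "f \<in> CX \<Longrightarrow> (\<lambda>x. exp (f x)) \<in> CX"
  unfolding CX_def by (auto intro!: continuous_intros)

lemma CX_ln: "f \<in> CX \<Longrightarrow> (\<And>x. 0 < f x) \<Longrightarrow> (\<lambda>x. ln (f x)) \<in> CX"
  unfolding CX_def by (auto intro!: continuous_intros) (metis order_less_irrefl)

lemma CX_sum: "finite I \<Longrightarrow> (\<And>i. i \<in> I \<Longrightarrow> F i \<in> CX) \<Longrightarrow> (\<lambda>x. \<Sum>i\<in>I. F i x) \<in> CX"
  unfolding CX_def by (auto intro!: continuous_intros)

lemma continuous_on_funpow:
  fixes \<alpha> :: "'a::topological_space \<Rightarrow> 'a"
  assumes "continuous_on UNIV \<alpha>"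
  shows "continuous_on UNIV (\<alpha> ^^ n)"
proof (induction n)
  case (Suc n)
  have "continuous_on UNIV ((\<alpha> ^^ n) \<circ> \<alpha>)"
    by (rule continuous_on_compose[OF assms continuous_on_subset[OF Suc subset_UNIV]])
  then show ?case by (simp only: funpow_Suc_right)
qed (simp add: continuous_on_id')

lemma CX_compose_funpow:
  fixes \<alpha> :: "'a::topological_space \<Rightarrow> 'a"
  assumes "continuous_on UNIV \<alpha>" and "f \<in> CX"
  shows "(\<lambda>x. f ((\<alpha> ^^ n) x)) \<in> CX"
  using continuous_on_compose[OF continuous_on_funpow[OF assms(1), of n] continuous_on_subset[of UNIV f]]
    assms(2)
  by (simp add: CX_def comp_def)

lemma CX_bounded:
  assumes "compact (UNIV :: 'a::topological_space set)" and "(f :: 'a \<Rightarrow> real) \<in> CX"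
  shows "\<exists>B. \<forall>x. \<bar>f x\<bar> \<le> B"
proof -
  have "compact (range f)"
    using assms by (intro compact_continuous_image) (auto simp: CX_def)
  then have "bounded (range f)"
    by (rule compact_imp_bounded)
  then show ?thesis
    unfolding bounded_iff by auto
qed

lemma supnorm_le: "(\<And>x. 0 \<le> f x) \<Longrightarrow> (\<And>x. f x \<le> c) \<Longrightarrow> supnorm f \<le> c"
  unfolding supnorm_def by (intro cSUP_least) auto

lemma prob_functional_add:
  "prob_functional \<mu> \<Longrightarrow> f \<in> CX \<Longrightarrow> g \<in> CX \<Longrightarrow> \<mu> (\<lambda>x. f x + g x) = \<mu> f + \<mu> g"
  unfolding prob_functional_def by blast

lemma prob_functional_cmult: "prob_functional \<mu> \<Longrightarrow> f \<in> CX \<Longrightarrow> \<mu> (\<lambda>x. c * f x) = c * \<mu> f"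
  unfolding prob_functional_def by blast

lemma prob_functional_nonneg: "prob_functional \<mu> \<Longrightarrow> f \<in> CX \<Longrightarrow> (\<And>x. 0 \<le> f x) \<Longrightarrow> 0 \<le> \<mu> f"
  unfolding prob_functional_def by blast

lemma prob_functional_const: "prob_functional \<mu> \<Longrightarrow> \<mu> (\<lambda>x. c) = c"
  using prob_functional_cmult[of \<mu> "\<lambda>x. 1" c] unfolding prob_functional_def by simp

lemma prob_functional_diff:
  assumes "prob_functional \<mu>" "f \<in> CX" "g \<in> CX"
  shows "\<mu> (\<lambda>x. f x - g x) = \<mu> f - \<mu> g"
  using prob_functional_add[OF assms(1,3) CX_diff[OF assms(2,3)]] by simp

lemma prob_functional_mono:
  assumes "prob_functional \<mu>" "f \<in> CX" "g \<in> CX" "\<And>x. f x \<le> g x"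
  shows "\<mu> f \<le> \<mu> g"
  using prob_functional_nonneg[OF assms(1) CX_diff[OF assms(3,2)]]
    prob_functional_diff[OF assms(1,3,2)] assms(4) by simp

lemma prob_functional_le_const:
  "prob_functional \<mu> \<Longrightarrow> f \<in> CX \<Longrightarrow> (\<And>x. f x \<le> c) \<Longrightarrow> \<mu> f \<le> c"
  using prob_functional_mono[of \<mu> f "\<lambda>x. c"] prob_functional_const[of \<mu> c] by simp

lemma prob_functional_sum:
  assumes "prob_functional \<mu>" "finite I" "\<And>i. i \<in> I \<Longrightarrow> F i \<in> CX"
  shows "\<mu> (\<lambda>x. \<Sum>i\<in>I. F i x) = (\<Sum>i\<in>I. \<mu> (F i))"
  using assms(2,3)
proof (induction I rule: finite_induct)
  case empty
  then show ?case using prob_functional_const[OF assms(1), of 0] by simp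
next
  case (insert i I)
  then show ?case
    by (simp add: prob_functional_add[OF assms(1)] CX_sum)
qed

lemma point_eval_in_MX: "(\<lambda>f. f x) \<in> MX"
  unfolding MX_def prob_functional_def by auto

lemma convex_comb_in_MX:
  assumes "\<mu> \<in> MX" "\<nu> \<in> MX" "0 \<le> t" "t \<le> 1"
  shows "(\<lambda>f. (1 - t) * \<mu> f + t * \<nu> f) \<in> MX"
  using assms unfolding MX_def mem_Collect_eq prob_functional_def
  by (auto simp: algebra_simps intro!: add_increasing2 mult_nonneg_nonneg mult_left_le_one_le)

lemma average_of_point_evals_in_MX:
  "finite S \<Longrightarrow> S \<noteq> {} \<Longrightarrow> (\<lambda>f. (\<Sum>g\<in>S. f (p g)) / card S) \<in> MX"
  unfolding MX_def prob_functional_def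
  by (auto simp: sum.distrib sum_distrib_left add_divide_distrib intro!: sum_nonneg divide_nonneg_nonneg)

definition positive_operator :: "(('a::topological_space \<Rightarrow> real) \<Rightarrow> ('a \<Rightarrow> real)) \<Rightarrow> bool" where
  "positive_operator L \<longleftrightarrow> (\<forall>f\<in>CX. L f \<in> CX) \<and>
     (\<forall>f\<in>CX. \<forall>g\<in>CX. L (\<lambda>x. f x + g x) = (\<lambda>x. L f x + L g x)) \<and>
     (\<forall>f\<in>CX. \<forall>c::real. L (\<lambda>x. c * f x) = (\<lambda>x. c * L f x)) \<and>
     (\<forall>f\<in>CX. (\<forall>x. 0 \<le> f x) \<longrightarrow> (\<forall>x. 0 \<le> L f x))"

lemma positive_operator_CX: "positive_operator L \<Longrightarrow> f \<in> CX \<Longrightarrow> L f \<in> CX"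
  unfolding positive_operator_def by blast

lemma positive_operator_add:
  "positive_operator L \<Longrightarrow> f \<in> CX \<Longrightarrow> g \<in> CX \<Longrightarrow> L (\<lambda>x. f x + g x) = (\<lambda>x. L f x + L g x)"
  unfolding positive_operator_def by blast

lemma positive_operator_cmult:
  "positive_operator L \<Longrightarrow> f \<in> CX \<Longrightarrow> L (\<lambda>x. c * f x) = (\<lambda>x. c * L f x)"
  unfolding positive_operator_def by blast

lemma positive_operator_nonneg:
  "positive_operator L \<Longrightarrow> f \<in> CX \<Longrightarrow> (\<And>x. 0 \<le> f x) \<Longrightarrow> 0 \<le> L f x"
  unfolding positive_operator_def by blast

lemma positive_operator_const: "positive_operator L \<Longrightarrow> L (\<lambda>x. c) = (\<lambda>x. c * L (\<lambda>x. 1) x)"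
  using positive_operator_cmult[of L "\<lambda>x. 1" c] by simp

lemma positive_operator_mono:
  assumes "positive_operator L" "f \<in> CX" "g \<in> CX" "\<And>x. f x \<le> g x"
  shows "L f x \<le> L g x"
proof -
  have "L g = (\<lambda>x. L f x + L (\<lambda>x. g x - f x) x)"
    using positive_operator_add[OF assms(1,2) CX_diff[OF assms(3,2)]] by simp
  then show ?thesis
    using positive_operator_nonneg[OF assms(1) CX_diff[OF assms(3,2)], of x] assms(4) by simp
qed

lemma positive_operator_le_const:
  "positive_operator L \<Longrightarrow> f \<in> CX \<Longrightarrow> (\<And>x. f x \<le> c) \<Longrightarrow> L f x \<le> c * L (\<lambda>x. 1) x"
  using positive_operator_mono[of L f "\<lambda>x. c" x] positive_operator_const[of L c] by simp

lemma positive_operator_sum: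
  assumes "positive_operator L" "finite I" "\<And>i. i \<in> I \<Longrightarrow> F i \<in> CX"
  shows "L (\<lambda>x. \<Sum>i\<in>I. F i x) = (\<lambda>x. \<Sum>i\<in>I. L (F i) x)"
  using assms(2,3)
proof (induction I rule: finite_induct)
  case empty
  then show ?case using positive_operator_const[OF assms(1), of 0] by simp
next
  case (insert i I)
  then show ?case
    by (simp add: positive_operator_add[OF assms(1)] CX_sum)
qed

lemma positive_operator_funpow: "positive_operator L \<Longrightarrow> positive_operator (L ^^ n)"
  by (induction n) (auto simp: positive_operator_def)

lemma positive_operator_powers_bounded:
  assumes "compact (UNIV :: 'a::topological_space set)" and "positive_operator (L :: ('a \<Rightarrow> real) \<Rightarrow> _)"
  obtains Q where "1 \<le> Q" and "\<And>p x. p \<le> m \<Longrightarrow> (L ^^ p) (\<lambda>x. 1) x \<le> Q"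
proof -
  have "\<forall>p. \<exists>B. \<forall>x. \<bar>(L ^^ p) (\<lambda>x. 1) x\<bar> \<le> B"
    using CX_bounded[OF assms(1) positive_operator_CX[OF positive_operator_funpow[OF assms(2)]]] by simp
  then obtain B where B: "\<And>p x. \<bar>(L ^^ p) (\<lambda>x. 1) x\<bar> \<le> B p"
    by metis
  have B_nonneg: "0 \<le> B p" for p
    using B by (meson abs_ge_zero order_trans)
  show ?thesis
  proof
    show "1 \<le> 1 + (\<Sum>p\<le>m. B p)"
      using B_nonneg by (simp add: sum_nonneg)
    fix p x assume "p \<le> m"
    then have "B p \<le> (\<Sum>p\<le>m. B p)"
      using B_nonneg by (intro member_le_sum) auto
    then show "(L ^^ p) (\<lambda>x. 1) x \<le> 1 + (\<Sum>p\<le>m. B p)"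
      using B[of p x] by simp
  qed
qed

lemma transfer_operator_positive: "transfer_operator \<alpha> A \<Longrightarrow> positive_operator A"
  unfolding transfer_operator_def positive_operator_def by blast

lemma transfer_operator_funpow_positive: "transfer_operator \<alpha> A \<Longrightarrow> positive_operator (A ^^ n)"
  using positive_operator_funpow[OF transfer_operator_positive] .

lemma transfer_operator_funpow:
  fixes \<alpha> :: "'a::topological_space \<Rightarrow> 'a"
  assumes "transfer_operator \<alpha> A" "continuous_on UNIV \<alpha>" "f \<in> CX" "g \<in> CX"
  shows "(A ^^ n) (\<lambda>x. f ((\<alpha> ^^ n) x) * g x) = (\<lambda>x. f x * (A ^^ n) g x)"
  using assms(3)
proof (induction n arbitrary: f)
  case (Suc n)
  have f\<alpha>: "(\<lambda>x. f (\<alpha> x)) \<in> CX"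
    using CX_compose_funpow[OF assms(2) Suc.prems, of 1] by simp
  have "(A ^^ Suc n) (\<lambda>x. f ((\<alpha> ^^ Suc n) x) * g x)
      = A ((A ^^ n) (\<lambda>x. (\<lambda>y. f (\<alpha> y)) ((\<alpha> ^^ n) x) * g x))"
    by simp
  also have "\<dots> = A (\<lambda>x. f (\<alpha> x) * (A ^^ n) g x)"
    using Suc.IH[OF f\<alpha>] by simp
  also have "\<dots> = (\<lambda>x. f x * A ((A ^^ n) g) x)"
    using assms(1) Suc.prems f\<alpha> positive_operator_CX[OF transfer_operator_funpow_positive[OF assms(1)] assms(4)]
    unfolding transfer_operator_def by blast
  finally show ?case by simp
qed simp

section \<open>A variational inequality for weighted logarithms\<close>

lemma ln_one_plus_ge_quadratic:
  fixes u :: real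
  assumes "-(1/2) \<le> u"
  shows "u - 2 * u^2 \<le> ln (1 + u)"
proof (cases "u \<le> 0")
  case True
  then show ?thesis
    using abs_ln_one_plus_x_minus_x_bound_nonpos[OF assms True] by (simp add: abs_if split: if_splits)
next
  case False
  show ?thesis
  proof (cases "u \<le> 1")
    case True
    then have "u - u^2 \<le> ln (1 + u)"
      using False by (intro ln_one_plus_pos_lower_bound) auto
    then show ?thesis
      by (smt (verit) zero_le_power2)
  next
    case False
    then have "u - 2 * u^2 \<le> 0"
      by (simp add: power2_eq_square)
    moreover have "0 \<le> ln (1 + u)"
      using False by simp
    ultimately show ?thesis by simp
  qed
qed

lemma weighted_ln_one_plus_ge:
  fixes a d :: "'g \<Rightarrow> real"
  assumes "finite P" "\<And>g. g \<in> P \<Longrightarrow> 0 \<le> a g" "(\<Sum>g\<in>P. a g) = 1"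
    and "\<And>g. g \<in> P \<Longrightarrow> -1 \<le> d g \<and> d g \<le> R" "1 \<le> R" "0 \<le> t" "t \<le> 1/2"
  shows "t * (\<Sum>g\<in>P. a g * d g) - 2 * t^2 * R^2 \<le> (\<Sum>g\<in>P. a g * ln (1 + t * d g))"
proof -
  have "a g * (t * d g - 2 * t^2 * R^2) \<le> a g * ln (1 + t * d g)" if g: "g \<in> P" for g
  proof -
    have "\<bar>t * d g\<bar> \<le> t * R"
      using assms(4)[OF g] assms(5,6) by (simp add: abs_mult abs_le_iff mult_left_mono)
    then have square: "(t * d g)^2 \<le> t^2 * R^2"
      by (metis abs_ge_zero power2_abs power_mono power_mult_distrib)
    have "t * (-1) \<le> t * d g"
      using assms(4)[OF g] assms(6) by (intro mult_left_mono) auto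
    then have "-(1/2) \<le> t * d g"
      using assms(7) by linarith
    then have "t * d g - 2 * (t * d g)^2 \<le> ln (1 + t * d g)"
      by (rule ln_one_plus_ge_quadratic)
    then have "t * d g - 2 * t^2 * R^2 \<le> ln (1 + t * d g)"
      using square by linarith
    then show ?thesis
      using assms(2)[OF g] by (rule mult_left_mono)
  qed
  then have "(\<Sum>g\<in>P. a g * (t * d g - 2 * t^2 * R^2)) \<le> (\<Sum>g\<in>P. a g * ln (1 + t * d g))"
    by (rule sum_mono)
  moreover have "(\<Sum>g\<in>P. a g * (t * d g - 2 * t^2 * R^2)) = t * (\<Sum>g\<in>P. a g * d g) - 2 * t^2 * R^2"
    using assms(3)
    by (simp add: algebra_simps sum_subtractf sum_distrib_left sum_distrib_right[symmetric])
  ultimately show ?thesis by simp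
qed

lemma log_sum_bounds_components_below:
  fixes a :: "'g \<Rightarrow> real"
  assumes "finite P" "P \<noteq> {}" "\<And>g. g \<in> P \<Longrightarrow> 0 < a g"
  obtains \<rho> where "0 < \<rho>"
    and "\<And>y g. (\<And>h. h \<in> P \<Longrightarrow> 0 < y h \<and> y h \<le> B) \<Longrightarrow> c < (\<Sum>h\<in>P. a h * ln (y h / a h))
           \<Longrightarrow> g \<in> P \<Longrightarrow> \<rho> < y g"
proof
  define K where "K = (\<Sum>h\<in>P. \<bar>a h * ln (B / a h)\<bar>)"
  define \<rho> where "\<rho> = Min ((\<lambda>g. a g * exp ((c - K) / a g)) ` P)"
  show "0 < \<rho>"
    unfolding \<rho>_def using assms by (subst Min_gr_iff) auto
  fix y g
  assume y: "\<And>h. h \<in> P \<Longrightarrow> 0 < y h \<and> y h \<le> B" and c: "c < (\<Sum>h\<in>P. a h * ln (y h / a h))"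
    and g: "g \<in> P"
  have term_le: "a h * ln (y h / a h) \<le> \<bar>a h * ln (B / a h)\<bar>" if h: "h \<in> P" for h
  proof -
    have "ln (y h / a h) \<le> ln (B / a h)"
      using y[OF h] assms(3)[OF h] by (simp add: divide_right_mono)
    then show ?thesis
      using assms(3)[OF h] by (smt (verit) mult_left_mono)
  qed
  have "(\<Sum>h\<in>P - {g}. a h * ln (y h / a h)) \<le> (\<Sum>h\<in>P - {g}. \<bar>a h * ln (B / a h)\<bar>)"
    using term_le by (intro sum_mono) auto
  also have "\<dots> \<le> K"
    unfolding K_def using assms(1) by (intro sum_mono2) auto
  finally have "c - K < a g * ln (y g / a g)"
    using c assms(1) g by (simp add: sum.remove)
  then have "(c - K) / a g < ln (y g / a g)"
    using assms(3)[OF g] by (simp add: divide_less_eq mult.commute)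
  then have "exp ((c - K) / a g) < y g / a g"
    using y[OF g] assms(3)[OF g] by (metis exp_less_cancel_iff exp_ln divide_pos_pos)
  then have "a g * exp ((c - K) / a g) < y g"
    using assms(3)[OF g] by (simp add: less_divide_eq mult.commute)
  moreover have "\<rho> \<le> a g * exp ((c - K) / a g)"
    unfolding \<rho>_def using assms(1) g by simp
  ultimately show "\<rho> < y g" by simp
qed

lemma log_sum_segment_increment_ge:
  fixes a y v :: "'g \<Rightarrow> real"
  assumes P: "finite P" "\<And>g. g \<in> P \<Longrightarrow> 0 < a g" "(\<Sum>g\<in>P. a g) = 1"
    and y: "\<And>g. g \<in> P \<Longrightarrow> \<rho> < y g" "0 < \<rho>"
    and v: "\<And>g. g \<in> P \<Longrightarrow> 0 \<le> v g \<and> v g \<le> B"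
    and R: "1 \<le> R" "B / \<rho> \<le> R" and t: "0 \<le> t" "t \<le> 1/2"
  shows "t * ((\<Sum>g\<in>P. a g / y g * v g) - 1) - 2 * t^2 * R^2
    \<le> (\<Sum>g\<in>P. a g * ln (((1 - t) * y g + t * v g) / a g)) - (\<Sum>g\<in>P. a g * ln (y g / a g))"
proof -
  have y_pos: "0 < y g" if "g \<in> P" for g
    using y(1)[OF that] y(2) by simp
  define d where "d g = (v g - y g) / y g" for g
  have d: "-1 \<le> d g \<and> d g \<le> R" if g: "g \<in> P" for g
  proof -
    have "v g / y g \<le> B / \<rho>"
      using v[OF g] y(1)[OF g] y(2) by (intro frac_le) auto
    moreover have "d g = v g / y g - 1"
      using y_pos[OF g] unfolding d_def by (simp add: field_simps)
    moreover have "0 \<le> v g / y g"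
      using v[OF g] y_pos[OF g] by simp
    ultimately show ?thesis
      using R by linarith
  qed
  have "ln (((1 - t) * y g + t * v g) / a g) = ln (y g / a g) + ln (1 + t * d g)" if g: "g \<in> P" for g
  proof -
    have "(1 - t) * y g + t * v g = y g * (1 + t * d g)"
      using y_pos[OF g] unfolding d_def by (simp add: field_simps)
    moreover have "0 < (1 - t) * y g + t * v g"
      using y_pos[OF g] t v[OF g] by (intro add_pos_nonneg mult_pos_pos mult_nonneg_nonneg) auto
    ultimately show ?thesis
      using y_pos[OF g] P(2)[OF g] ln_mult_pos[of "y g / a g" "1 + t * d g"]
      by (simp add: mult.commute zero_less_mult_iff)
  qed
  then have "(\<Sum>g\<in>P. a g * ln (((1 - t) * y g + t * v g) / a g)) - (\<Sum>g\<in>P. a g * ln (y g / a g))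
      = (\<Sum>g\<in>P. a g * ln (1 + t * d g))"
    by (simp add: distrib_left sum.distrib)
  moreover have "t * (\<Sum>g\<in>P. a g * d g) - 2 * t^2 * R^2 \<le> (\<Sum>g\<in>P. a g * ln (1 + t * d g))"
    by (rule weighted_ln_one_plus_ge) (use P d t R in \<open>auto intro: less_imp_le\<close>)
  moreover have "(\<Sum>g\<in>P. a g * d g) = (\<Sum>g\<in>P. a g / y g * v g) - 1"
  proof -
    have "a g * d g = a g / y g * v g - a g" if "g \<in> P" for g
      using y_pos[OF that] by (simp add: d_def field_simps)
    then have "(\<Sum>g\<in>P. a g * d g) = (\<Sum>g\<in>P. a g / y g * v g - a g)"
      by (rule sum.cong[OF refl])
    then show ?thesis
      using P(3) by (simp add: sum_subtractf)
  qed
  ultimately show ?thesis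
    by simp
qed

lemma log_sum_near_maximizer:
  fixes a :: "'g \<Rightarrow> real" and Y V :: "('g \<Rightarrow> real) set"
  assumes P: "finite P" "\<And>g. g \<in> P \<Longrightarrow> 0 < a g" "(\<Sum>g\<in>P. a g) = 1"
    and Y_bounded: "\<And>y g. y \<in> Y \<Longrightarrow> g \<in> P \<Longrightarrow> 0 \<le> y g \<and> y g \<le> B"
    and V_bounded: "\<And>v g. v \<in> V \<Longrightarrow> g \<in> P \<Longrightarrow> 0 \<le> v g \<and> v g \<le> B"
    and upper: "\<And>y. y \<in> Y \<Longrightarrow> (\<forall>g\<in>P. 0 < y g) \<Longrightarrow> (\<Sum>g\<in>P. a g * ln (y g / a g)) \<le> s"
    and approx: "\<And>\<eta>. 0 < \<eta> \<Longrightarrow> \<exists>y\<in>Y. (\<forall>g\<in>P. 0 < y g) \<and> s - \<eta> < (\<Sum>g\<in>P. a g * ln (y g / a g))"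
    and segment: "\<And>y v t. y \<in> Y \<Longrightarrow> v \<in> V \<Longrightarrow> 0 \<le> t \<Longrightarrow> t \<le> 1 \<Longrightarrow> (\<lambda>g. (1 - t) * y g + t * v g) \<in> Y"
    and "0 < \<gamma>"
  shows "\<exists>y\<in>Y. (\<forall>g\<in>P. 0 < y g) \<and> (\<Sum>g\<in>P. a g * ln (y g / a g)) \<le> s \<and>
           (\<forall>v\<in>V. (\<Sum>g\<in>P. a g / y g * v g) \<le> 1 + \<gamma>)"
proof -
  have "P \<noteq> {}"
    using P(3) by auto
  obtain \<rho> where "0 < \<rho>"
    and lower: "\<And>y g. (\<And>h. h \<in> P \<Longrightarrow> 0 < y h \<and> y h \<le> B)
      \<Longrightarrow> s - 1 < (\<Sum>h\<in>P. a h * ln (y h / a h)) \<Longrightarrow> g \<in> P \<Longrightarrow> \<rho> < y g"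
    using log_sum_bounds_components_below[where a=a and B=B and c="s - 1", OF P(1) \<open>P \<noteq> {}\<close> P(2)]
    by blast
  define \<Phi> where "\<Phi> y = (\<Sum>g\<in>P. a g * ln (y g / a g))" for y :: "'g \<Rightarrow> real"
  define R where "R = max 1 (B / \<rho>)"
  have R: "1 \<le> R" "B / \<rho> \<le> R"
    by (simp_all add: R_def)
  \<comment> \<open>Step size \<open>t\<close> and accuracy \<open>\<eta>\<close> are chosen so that \<open>(\<eta> + 2 t\<^sup>2 R\<^sup>2) / t \<le> \<gamma>\<close>.\<close>
  define t where "t = min (1/2) (\<gamma> / (4 * R^2))"
  define \<eta> where "\<eta> = min 1 (\<gamma> * t / 2)"
  have t: "0 < t" "t \<le> 1/2" "2 * t^2 * R^2 \<le> \<gamma> * t / 2"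
  proof -
    show "0 < t" "t \<le> 1/2"
      using \<open>0 < \<gamma>\<close> R(1) by (auto simp: t_def)
    have "t * R^2 \<le> \<gamma> / 4"
      unfolding t_def R_def by (simp add: min_def field_simps)
    then show "2 * t^2 * R^2 \<le> \<gamma> * t / 2"
      using \<open>0 < t\<close> by (simp add: power2_eq_square)
  qed
  have \<eta>: "0 < \<eta>" "\<eta> \<le> 1" "\<eta> \<le> \<gamma> * t / 2"
    using \<open>0 < \<gamma>\<close> t by (auto simp: \<eta>_def)
  obtain y where y: "y \<in> Y" "\<forall>g\<in>P. 0 < y g" "s - \<eta> < \<Phi> y"
    using approx[OF \<eta>(1)] unfolding \<Phi>_def by blast
  have y_gt: "\<rho> < y g" if "g \<in> P" for g
    using lower[of y g] y \<eta>(2) Y_bounded that unfolding \<Phi>_def by force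
  have "(\<Sum>g\<in>P. a g / y g * v g) \<le> 1 + \<gamma>" if v: "v \<in> V" for v
  proof -
    have "\<Phi> (\<lambda>g. (1 - t) * y g + t * v g) \<le> s"
      unfolding \<Phi>_def
    proof (rule upper[OF segment[OF y(1) v]])
      show "\<forall>g\<in>P. 0 < (1 - t) * y g + t * v g"
        using y(2) t V_bounded[OF v] by (auto intro!: add_pos_nonneg mult_pos_pos mult_nonneg_nonneg)
    qed (use t in auto)
    moreover have "t * ((\<Sum>g\<in>P. a g / y g * v g) - 1) - 2 * t^2 * R^2 \<le> \<Phi> (\<lambda>g. (1 - t) * y g + t * v g) - \<Phi> y"
      unfolding \<Phi>_def using P y_gt \<open>0 < \<rho>\<close> V_bounded[OF v] R t
      by (intro log_sum_segment_increment_ge) auto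
    ultimately have "t * ((\<Sum>g\<in>P. a g / y g * v g) - 1) < \<gamma> * t"
      using y(3) t(3) \<eta>(3) by linarith
    then show ?thesis
      using t(1) by (simp add: mult.commute[of \<gamma>])
  qed
  moreover have "\<Phi> y \<le> s"
    using upper y(1,2) unfolding \<Phi>_def by blast
  ultimately show ?thesis
    using y(1,2) unfolding \<Phi>_def by blast
qed

section \<open>From t-entropy to exponential potentials\<close>

lemma partition_of_unity_prob_sum:
  assumes "prob_functional \<mu>" "partition_of_unity D"
  shows "(\<Sum>g\<in>D. \<mu> g) = 1"
  using prob_functional_sum[OF assms(1), of D "\<lambda>g. g"] assms
  unfolding partition_of_unity_def prob_functional_def by (auto simp: subset_iff)

lemma partition_of_unity_support:
  assumes "\<mu> \<in> MX" "partition_of_unity D"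
  shows "finite {g\<in>D. \<mu> g \<noteq> 0}" "\<And>g. g \<in> {g\<in>D. \<mu> g \<noteq> 0} \<Longrightarrow> 0 < \<mu> g"
    "(\<Sum>g\<in>{g\<in>D. \<mu> g \<noteq> 0}. \<mu> g) = 1"
proof -
  have "prob_functional \<mu>" "finite D"
    using assms by (auto simp: MX_def partition_of_unity_def)
  then show "finite {g\<in>D. \<mu> g \<noteq> 0}"
    by simp
  show "0 < \<mu> g" if "g \<in> {g\<in>D. \<mu> g \<noteq> 0}" for g
    using that prob_functional_nonneg[OF \<open>prob_functional \<mu>\<close>, of g] assms(2)
    unfolding partition_of_unity_def by (force simp: order_le_neq_trans)
  have "(\<Sum>g\<in>{g\<in>D. \<mu> g \<noteq> 0}. \<mu> g) = (\<Sum>g\<in>D. \<mu> g)"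
    using \<open>finite D\<close> by (intro sum.mono_neutral_left) auto
  then show "(\<Sum>g\<in>{g\<in>D. \<mu> g \<noteq> 0}. \<mu> g) = 1"
    using partition_of_unity_prob_sum[OF \<open>prob_functional \<mu>\<close> assms(2)] by simp
qed

lemma partition_of_unity_operator_sum:
  assumes "positive_operator L" "partition_of_unity D"
  shows "(\<Sum>g\<in>D. L g x) = L (\<lambda>x. 1) x"
  using positive_operator_sum[OF assms(1), of D "\<lambda>g. g"] assms(2)
  unfolding partition_of_unity_def by (auto simp: subset_iff)

lemma sum_tau_summand_eq_ereal:
  assumes "finite D" "\<And>g. g \<in> D \<Longrightarrow> a g \<noteq> 0 \<Longrightarrow> b g \<noteq> 0"
  shows "(\<Sum>g\<in>D. tau_summand (a g) (b g)) = ereal (\<Sum>g\<in>{g\<in>D. a g \<noteq> 0}. a g * ln (b g / a g))"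
proof -
  have "(\<Sum>g\<in>D. tau_summand (a g) (b g)) = (\<Sum>g\<in>{g\<in>D. a g \<noteq> 0}. tau_summand (a g) (b g))"
    using assms(1) by (intro sum.mono_neutral_right) (auto simp: tau_summand_def)
  also have "\<dots> = (\<Sum>g\<in>{g\<in>D. a g \<noteq> 0}. ereal (a g * ln (b g / a g)))"
    using assms(2) by (intro sum.cong) (auto simp: tau_summand_def)
  finally show ?thesis by simp
qed

lemma sum_tau_summand_eq_minf:
  assumes "finite D" "j \<in> D" "a j \<noteq> 0" "b j = 0"
  shows "(\<Sum>g\<in>D. tau_summand (a g) (b g)) = -\<infinity>"
proof -
  have "(\<Sum>g\<in>D - {j}. tau_summand (a g) (b g)) \<noteq> \<infinity>"
    by (simp add: sum_Pinfty tau_summand_def)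
  then show ?thesis
    using assms by (simp add: sum.remove tau_summand_def)
qed

lemma partition_of_unity_exp_mixture_pos:
  assumes "partition_of_unity D"
  shows "0 < (\<Sum>g\<in>D. exp (w g) * g x)"
proof -
  have D: "finite D" "\<And>g. g \<in> D \<Longrightarrow> 0 \<le> g x" "(\<Sum>g\<in>D. g x) = 1"
    using assms unfolding partition_of_unity_def by auto
  obtain g where "g \<in> D" "0 < g x"
  proof (rule ccontr)
    assume "\<not> thesis"
    then have "(\<Sum>g\<in>D. g x) \<le> 0"
      using that by (intro sum_nonpos) force
    then show False
      using D(3) by simp
  qed
  then show ?thesis
    using D by (intro sum_pos2[where i=g]) auto
qed

lemma partition_of_unity_exp_mixture_ge:
  assumes "partition_of_unity D"
  shows "exp (\<Sum>g\<in>D. w g * g x) \<le> (\<Sum>g\<in>D. exp (w g) * g x)"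
proof -
  have "exp (\<Sum>g\<in>D. g x *\<^sub>R w g) \<le> (\<Sum>g\<in>D. g x * exp (w g))"
    using assms unfolding partition_of_unity_def by (intro convex_on_sum[OF _ _ exp_convex]) auto
  then show ?thesis
    by (simp add: mult.commute)
qed

lemma potential_from_weights:
  assumes "prob_functional \<mu>" "positive_operator L" "partition_of_unity D"
    and weights: "\<And>x. (\<Sum>g\<in>D. exp (w g) * L g x) \<le> exp (s + (\<Sum>g\<in>D. \<mu> g * w g))"
  shows "\<exists>\<phi>\<in>CX. \<forall>x. L (\<lambda>x. exp (\<phi> x)) x \<le> exp (s + \<mu> \<phi>)"
proof -
  have D: "finite D" "D \<subseteq> CX"
    using assms(3) unfolding partition_of_unity_def by auto
  define F where "F x = (\<Sum>g\<in>D. exp (w g) * g x)" for x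
  have F_CX: "F \<in> CX"
    unfolding F_def using D by (intro CX_sum CX_cmult) auto
  have F_pos: "0 < F x" for x
    unfolding F_def by (rule partition_of_unity_exp_mixture_pos[OF assms(3)])
  define \<phi> where "\<phi> x = ln (F x)" for x
  have \<phi>_CX: "\<phi> \<in> CX"
    unfolding \<phi>_def using CX_ln[OF F_CX F_pos] .
  have L_exp: "L (\<lambda>x. exp (\<phi> x)) = (\<lambda>x. \<Sum>g\<in>D. exp (w g) * L g x)"
  proof -
    have "(\<lambda>x. exp (\<phi> x)) = F"
      using F_pos unfolding \<phi>_def by auto
    moreover have "L F = (\<lambda>x. \<Sum>g\<in>D. L (\<lambda>x. exp (w g) * g x) x)"
      unfolding F_def using D by (intro positive_operator_sum[OF assms(2)]) (auto intro!: CX_cmult)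
    ultimately show ?thesis
      using D(2) positive_operator_cmult[OF assms(2)] by (auto simp: subset_iff)
  qed
  have "(\<Sum>g\<in>D. w g * g x) \<le> \<phi> x" for x
    unfolding \<phi>_def F_def using partition_of_unity_exp_mixture_ge[OF assms(3)]
      partition_of_unity_exp_mixture_pos[OF assms(3)] by (simp add: ln_ge_iff)
  then have "\<mu> (\<lambda>x. \<Sum>g\<in>D. w g * g x) \<le> \<mu> \<phi>"
    using D by (intro prob_functional_mono[OF assms(1) _ \<phi>_CX] CX_sum CX_cmult) auto
  moreover have "\<mu> (\<lambda>x. \<Sum>g\<in>D. w g * g x) = (\<Sum>g\<in>D. \<mu> (\<lambda>x. w g * g x))"
    using D by (intro prob_functional_sum[OF assms(1)]) (auto intro!: CX_cmult)
  moreover have "\<dots> = (\<Sum>g\<in>D. \<mu> g * w g)"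
    using D(2) by (intro sum.cong) (auto simp: prob_functional_cmult[OF assms(1)])
  ultimately have "exp (s + (\<Sum>g\<in>D. \<mu> g * w g)) \<le> exp (s + \<mu> \<phi>)"
    by simp
  then have "L (\<lambda>x. exp (\<phi> x)) x \<le> exp (s + \<mu> \<phi>)" for x
    using order_trans[OF weights[of x]] by (simp add: L_exp)
  then show ?thesis
    using \<phi>_CX by blast
qed

lemma partition_of_unity_operator_bounds:
  assumes "positive_operator L" "partition_of_unity D" "g \<in> D"
  shows "0 \<le> L g x" "L g x \<le> L (\<lambda>x. 1) x"
proof -
  have D: "finite D" "\<And>g. g \<in> D \<Longrightarrow> g \<in> CX" "\<And>g x. g \<in> D \<Longrightarrow> 0 \<le> g x"
    using assms(2) unfolding partition_of_unity_def by auto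
  have nonneg: "0 \<le> L h x" if "h \<in> D" for h
    using positive_operator_nonneg[OF assms(1) D(2)[OF that]] D(3)[OF that] by blast
  then show "0 \<le> L g x"
    using assms(3) .
  show "L g x \<le> L (\<lambda>x. 1) x"
    using member_le_sum[of g D "\<lambda>h. L h x"] nonneg assms(3) D(1)
      partition_of_unity_operator_sum[OF assms(1,2)] by simp
qed

lemma partition_of_unity_measure_bounds:
  assumes "positive_operator L" "partition_of_unity D" "g \<in> D" "m \<in> MX"
  shows "0 \<le> m (L g)" and "(\<And>x. L (\<lambda>x. 1) x \<le> B) \<Longrightarrow> m (L g) \<le> B"
proof -
  have "prob_functional m" "L g \<in> CX"
    using assms positive_operator_CX[OF assms(1)] by (auto simp: MX_def partition_of_unity_def)
  then show "0 \<le> m (L g)"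
    using partition_of_unity_operator_bounds(1)[OF assms(1-3)] by (rule prob_functional_nonneg)
  show "m (L g) \<le> B" if "\<And>x. L (\<lambda>x. 1) x \<le> B"
    using \<open>prob_functional m\<close> \<open>L g \<in> CX\<close>
  proof (rule prob_functional_le_const)
    show "L g x \<le> B" for x
      using partition_of_unity_operator_bounds(2)[OF assms(1-3), of x] that[of x] by simp
  qed
qed

lemma log_sum_le_tau_sup:
  assumes "finite D" "m \<in> MX" "\<And>g. g \<in> D \<Longrightarrow> \<mu> g \<noteq> 0 \<Longrightarrow> 0 < m (L g)"
  shows "ereal (\<Sum>g\<in>{g\<in>D. \<mu> g \<noteq> 0}. \<mu> g * ln (m (L g) / \<mu> g))
    \<le> (SUP m\<in>MX. \<Sum>g\<in>D. tau_summand (\<mu> g) (m (L g)))"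
proof -
  have "(\<Sum>g\<in>D. tau_summand (\<mu> g) (m (L g))) = ereal (\<Sum>g\<in>{g\<in>D. \<mu> g \<noteq> 0}. \<mu> g * ln (m (L g) / \<mu> g))"
    using assms(3) by (intro sum_tau_summand_eq_ereal[OF assms(1)]) fastforce
  then show ?thesis
    using SUP_upper[OF assms(2), of "\<lambda>m. \<Sum>g\<in>D. tau_summand (\<mu> g) (m (L g))"] by simp
qed

lemma tau_sup_approximated:
  fixes L :: "('a::topological_space \<Rightarrow> real) \<Rightarrow> ('a \<Rightarrow> real)"
  assumes L: "positive_operator L" and D: "partition_of_unity D"
    and sup: "(SUP m\<in>MX. \<Sum>g\<in>D. tau_summand (\<mu> g) (m (L g))) = ereal s" and "0 < \<eta>"
  defines "P \<equiv> {g\<in>D. \<mu> g \<noteq> 0}"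
  obtains m where "m \<in> MX" "\<And>g. g \<in> P \<Longrightarrow> 0 < m (L g)"
    "s - \<eta> < (\<Sum>g\<in>P. \<mu> g * ln (m (L g) / \<mu> g))"
proof -
  have "finite D"
    using D unfolding partition_of_unity_def by auto
  have "ereal (s - \<eta>) < (SUP m\<in>MX. \<Sum>g\<in>D. tau_summand (\<mu> g) (m (L g)))"
    using sup \<open>0 < \<eta>\<close> by simp
  then obtain m where m: "m \<in> MX" "ereal (s - \<eta>) < (\<Sum>g\<in>D. tau_summand (\<mu> g) (m (L g)))"
    by (auto simp: less_SUP_iff)
  have m_pos: "0 < m (L g)" if "g \<in> D" "\<mu> g \<noteq> 0" for g
  proof -
    have "m (L g) \<noteq> 0"
      using m(2) sum_tau_summand_eq_minf[where a=\<mu> and b="\<lambda>g. m (L g)", OF \<open>finite D\<close> that] by auto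
    moreover have "0 \<le> m (L g)"
      by (rule partition_of_unity_measure_bounds(1)[OF L D that(1) m(1)])
    ultimately show ?thesis
      by simp
  qed
  then have "(\<Sum>g\<in>D. tau_summand (\<mu> g) (m (L g))) = ereal (\<Sum>g\<in>P. \<mu> g * ln (m (L g) / \<mu> g))"
    unfolding P_def by (intro sum_tau_summand_eq_ereal[OF \<open>finite D\<close>]) (simp add: less_imp_neq[symmetric])
  then show ?thesis
    using that m m_pos unfolding P_def by simp
qed

lemma tau_sup_near_optimal_measure:
  fixes L :: "('a::topological_space \<Rightarrow> real) \<Rightarrow> ('a \<Rightarrow> real)"
  assumes L: "positive_operator L" and \<mu>: "\<mu> \<in> MX" and D: "partition_of_unity D"
    and bound: "\<And>x. L (\<lambda>x. 1) x \<le> B"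
    and sup: "(SUP m\<in>MX. \<Sum>g\<in>D. tau_summand (\<mu> g) (m (L g))) = ereal s"
    and "0 < \<gamma>"
  defines "P \<equiv> {g\<in>D. \<mu> g \<noteq> 0}"
  obtains m where "m \<in> MX" "\<And>g. g \<in> P \<Longrightarrow> 0 < m (L g)"
    "(\<Sum>g\<in>P. \<mu> g * ln (m (L g) / \<mu> g)) \<le> s"
    "\<And>x. (\<Sum>g\<in>P. \<mu> g / m (L g) * L g x) \<le> 1 + \<gamma>"
proof -
  have "finite D"
    using D unfolding partition_of_unity_def by auto
  have P: "finite P" "\<And>g. g \<in> P \<Longrightarrow> 0 < \<mu> g" "(\<Sum>g\<in>P. \<mu> g) = 1"
    unfolding P_def using partition_of_unity_support[OF \<mu> D] by auto
  have L_bounds: "0 \<le> L g x \<and> L g x \<le> B" if "g \<in> P" for g x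
    using partition_of_unity_operator_bounds[OF L D, of g x] bound[of x] that by (auto simp: P_def)
  have mL_bounds: "0 \<le> m (L g) \<and> m (L g) \<le> B" if "m \<in> MX" "g \<in> P" for m g
    using partition_of_unity_measure_bounds[OF L D _ that(1)] bound that(2) by (auto simp: P_def)
  define Y where "Y = {\<lambda>g. m (L g) | m. m \<in> MX}"
  define V where "V = {\<lambda>g. L g x | x. True}"
  have "\<exists>y\<in>Y. (\<forall>g\<in>P. 0 < y g) \<and> (\<Sum>g\<in>P. \<mu> g * ln (y g / \<mu> g)) \<le> s \<and>
      (\<forall>v\<in>V. (\<Sum>g\<in>P. \<mu> g / y g * v g) \<le> 1 + \<gamma>)"
  proof (rule log_sum_near_maximizer)
    show "finite P" "\<And>g. g \<in> P \<Longrightarrow> 0 < \<mu> g" "(\<Sum>g\<in>P. \<mu> g) = 1" "0 < \<gamma>"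
      using P \<open>0 < \<gamma>\<close> by auto
    show "\<And>y g. y \<in> Y \<Longrightarrow> g \<in> P \<Longrightarrow> 0 \<le> y g \<and> y g \<le> B"
      using mL_bounds unfolding Y_def by blast
    show "\<And>v g. v \<in> V \<Longrightarrow> g \<in> P \<Longrightarrow> 0 \<le> v g \<and> v g \<le> B"
      using L_bounds unfolding V_def by blast
  next
    fix y
    assume "y \<in> Y" "\<forall>g\<in>P. 0 < y g"
    then obtain m where "m \<in> MX" and y: "y = (\<lambda>g. m (L g))"
      unfolding Y_def by blast
    then have "ereal (\<Sum>g\<in>P. \<mu> g * ln (y g / \<mu> g)) \<le> ereal s"
      using log_sum_le_tau_sup[OF \<open>finite D\<close>, of m \<mu> L] \<open>\<forall>g\<in>P. 0 < y g\<close> sup unfolding P_def by auto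
    then show "(\<Sum>g\<in>P. \<mu> g * ln (y g / \<mu> g)) \<le> s"
      by simp
  next
    fix \<eta> :: real
    assume "0 < \<eta>"
    then obtain m where "m \<in> MX" "\<And>g. g \<in> P \<Longrightarrow> 0 < m (L g)"
      "s - \<eta> < (\<Sum>g\<in>P. \<mu> g * ln (m (L g) / \<mu> g))"
      using tau_sup_approximated[OF L D sup, folded P_def] by blast
    then show "\<exists>y\<in>Y. (\<forall>g\<in>P. 0 < y g) \<and> s - \<eta> < (\<Sum>g\<in>P. \<mu> g * ln (y g / \<mu> g))"
      unfolding Y_def by (intro bexI[of _ "\<lambda>g. m (L g)"]) auto
  next
    fix y v and t :: real
    assume "y \<in> Y" "v \<in> V" "0 \<le> t" "t \<le> 1"
    then obtain m x where "m \<in> MX" "y = (\<lambda>g. m (L g))" "v = (\<lambda>g. L g x)"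
      unfolding Y_def V_def by blast
    then show "(\<lambda>g. (1 - t) * y g + t * v g) \<in> Y"
      using convex_comb_in_MX[OF \<open>m \<in> MX\<close> point_eval_in_MX \<open>0 \<le> t\<close> \<open>t \<le> 1\<close>, of x]
      unfolding Y_def by force
  qed
  then obtain m where m: "m \<in> MX" "\<forall>g\<in>P. 0 < m (L g)" "(\<Sum>g\<in>P. \<mu> g * ln (m (L g) / \<mu> g)) \<le> s"
    "\<forall>v\<in>V. (\<Sum>g\<in>P. \<mu> g / m (L g) * v g) \<le> 1 + \<gamma>"
    unfolding Y_def by blast
  show ?thesis
  proof (rule that[OF m(1)])
    fix x
    have "(\<lambda>g. L g x) \<in> V"
      unfolding V_def by blast
    from bspec[OF m(4) this] show "(\<Sum>g\<in>P. \<mu> g / m (L g) * L g x) \<le> 1 + \<gamma>"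
      by simp
  qed (use m(2,3) in auto)
qed

lemma tau_sup_finite_imp_weights:
  fixes L :: "('a::topological_space \<Rightarrow> real) \<Rightarrow> ('a \<Rightarrow> real)"
  assumes L: "positive_operator L" and \<mu>: "\<mu> \<in> MX" and D: "partition_of_unity D"
    and bound: "\<And>x. L (\<lambda>x. 1) x \<le> B" "0 \<le> B"
    and sup: "(SUP m\<in>MX. \<Sum>g\<in>D. tau_summand (\<mu> g) (m (L g))) = ereal s\<^sub>0" and "s\<^sub>0 < s"
  shows "\<exists>w. \<forall>x. (\<Sum>g\<in>D. exp (w g) * L g x) \<le> exp (s + (\<Sum>g\<in>D. \<mu> g * w g))"
proof -
  define P where "P = {g\<in>D. \<mu> g \<noteq> 0}"
  define \<gamma> where "\<gamma> = (s - s\<^sub>0) / 2"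
  have "0 < \<gamma>"
    using \<open>s\<^sub>0 < s\<close> by (simp add: \<gamma>_def)
  obtain m where "m \<in> MX" and m: "\<And>g. g \<in> P \<Longrightarrow> 0 < m (L g)"
    "(\<Sum>g\<in>P. \<mu> g * ln (m (L g) / \<mu> g)) \<le> s\<^sub>0" "\<And>x. (\<Sum>g\<in>P. \<mu> g / m (L g) * L g x) \<le> 1 + \<gamma>"
    using tau_sup_near_optimal_measure[OF L \<mu> D bound(1) sup \<open>0 < \<gamma>\<close>, folded P_def] by blast
  have "finite D" "P \<subseteq> D"
    using D by (auto simp: partition_of_unity_def P_def)
  have P_pos: "\<And>g. g \<in> P \<Longrightarrow> 0 < \<mu> g"
    unfolding P_def by (rule partition_of_unity_support(2)[OF \<mu> D])
  define \<zeta> where "\<zeta> = \<gamma> / (B + 1)"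
  have "0 < \<zeta>" "\<zeta> * B \<le> \<gamma>"
    using \<open>0 < \<gamma>\<close> bound(2) by (auto simp: \<zeta>_def field_simps)
  define w where "w g = (if g \<in> P then ln (\<mu> g / m (L g)) else ln \<zeta>)" for g
  have "(\<Sum>g\<in>D. \<mu> g * w g) = (\<Sum>g\<in>P. \<mu> g * w g)"
    using \<open>finite D\<close> by (intro sum.mono_neutral_right) (auto simp: P_def)
  also have "\<dots> = (\<Sum>g\<in>P. - (\<mu> g * ln (m (L g) / \<mu> g)))"
    using m(1) P_pos by (intro sum.cong) (auto simp: w_def ln_div algebra_simps)
  also have "\<dots> = - (\<Sum>g\<in>P. \<mu> g * ln (m (L g) / \<mu> g))"
    by (simp add: sum_negf)
  finally have weight_sum: "s - s\<^sub>0 \<le> s + (\<Sum>g\<in>D. \<mu> g * w g)"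
    using m(2) by linarith
  show ?thesis
  proof (intro exI allI)
    fix x
    have "(\<Sum>g\<in>D - P. exp (w g) * L g x) = \<zeta> * (\<Sum>g\<in>D - P. L g x)"
      using \<open>0 < \<zeta>\<close> by (simp add: w_def sum_distrib_left)
    also have "\<dots> \<le> \<zeta> * (\<Sum>g\<in>D. L g x)"
      using \<open>finite D\<close> \<open>0 < \<zeta>\<close> partition_of_unity_operator_bounds(1)[OF L D]
      by (intro mult_left_mono sum_mono2) auto
    also have "\<dots> \<le> \<zeta> * B"
      using \<open>0 < \<zeta>\<close> bound(1) by (simp add: partition_of_unity_operator_sum[OF L D])
    finally have off_P: "(\<Sum>g\<in>D - P. exp (w g) * L g x) \<le> \<gamma>"
      using \<open>\<zeta> * B \<le> \<gamma>\<close> by linarith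
    have "(\<Sum>g\<in>P. exp (w g) * L g x) = (\<Sum>g\<in>P. \<mu> g / m (L g) * L g x)"
      using m(1) P_pos by (intro sum.cong) (auto simp: w_def)
    then have on_P: "(\<Sum>g\<in>P. exp (w g) * L g x) \<le> 1 + \<gamma>"
      using m(3) by simp
    have "(\<Sum>g\<in>D. exp (w g) * L g x) = (\<Sum>g\<in>D - P. exp (w g) * L g x) + (\<Sum>g\<in>P. exp (w g) * L g x)"
      by (rule sum.subset_diff[OF \<open>P \<subseteq> D\<close> \<open>finite D\<close>])
    also have "\<dots> \<le> \<gamma> + (1 + \<gamma>)"
      by (rule add_mono[OF off_P on_P])
    also have "\<dots> = 1 + (s - s\<^sub>0)"
      by (simp add: \<gamma>_def)
    also have "\<dots> \<le> exp (s - s\<^sub>0)"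
      by (rule exp_ge_add_one_self)
    also have "\<dots> \<le> exp (s + (\<Sum>g\<in>D. \<mu> g * w g))"
      using weight_sum by simp
    finally show "(\<Sum>g\<in>D. exp (w g) * L g x) \<le> exp (s + (\<Sum>g\<in>D. \<mu> g * w g))" .
  qed
qed

lemma tau_sup_minf_imp_vanishing:
  fixes L :: "('a::topological_space \<Rightarrow> real) \<Rightarrow> ('a \<Rightarrow> real)"
  assumes L: "positive_operator L" and \<mu>: "\<mu> \<in> MX" and D: "partition_of_unity D"
    and sup: "(SUP m\<in>MX. \<Sum>g\<in>D. tau_summand (\<mu> g) (m (L g))) = -\<infinity>"
  obtains g where "g \<in> D" "0 < \<mu> g" "\<And>x. L g x = 0"
proof -
  define P where "P = {g\<in>D. \<mu> g \<noteq> 0}"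
  have "finite D"
    using D by (simp add: partition_of_unity_def)
  have P_pos: "\<And>g. g \<in> P \<Longrightarrow> 0 < \<mu> g" and "P \<noteq> {}"
    unfolding P_def using partition_of_unity_support[OF \<mu> D] by (auto simp del: Collect_empty_eq)
  have "\<exists>g\<in>P. \<forall>x. L g x = 0"
  proof (rule ccontr)
    assume "\<not> ?thesis"
    then obtain p where p: "\<And>g. g \<in> P \<Longrightarrow> L g (p g) \<noteq> 0"
      by metis
    \<comment> \<open>The uniform average of point masses at the points \<open>p g\<close> sees every \<open>L g\<close> with \<open>g \<in> P\<close>.\<close>
    define m where "m = (\<lambda>f. (\<Sum>h\<in>P. f (p h)) / card P)"
    have "m \<in> MX"
      unfolding m_def using \<open>finite D\<close> \<open>P \<noteq> {}\<close>
      by (intro average_of_point_evals_in_MX) (auto simp: P_def)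
    have "0 < m (L g)" if "g \<in> P" for g
    proof -
      have "0 < (\<Sum>h\<in>P. L g (p h))"
        using p[OF that] that \<open>finite D\<close> partition_of_unity_operator_bounds(1)[OF L D]
        by (intro sum_pos2[where i=g]) (auto simp: P_def order_le_neq_trans)
      moreover have "0 < card P"
        using \<open>finite D\<close> \<open>P \<noteq> {}\<close> by (simp add: card_gt_0_iff P_def)
      ultimately show ?thesis
        unfolding m_def by simp
    qed
    then show False
      using log_sum_le_tau_sup[OF \<open>finite D\<close> \<open>m \<in> MX\<close>, of \<mu> L] sup unfolding P_def by simp
  qed
  then show ?thesis
    using that P_pos unfolding P_def by blast
qed

lemma vanishing_imp_weights:
  assumes L: "positive_operator L" and D: "partition_of_unity D"
    and bound: "\<And>x. L (\<lambda>x. 1) x \<le> B" "0 < B"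
    and g\<^sub>0: "g\<^sub>0 \<in> D" "0 < \<mu> g\<^sub>0" "\<And>x. L g\<^sub>0 x = 0"
  shows "\<exists>w. \<forall>x. (\<Sum>g\<in>D. exp (w g) * L g x) \<le> exp (s + (\<Sum>g\<in>D. \<mu> g * w g))"
proof (intro exI allI)
  define w where "w g = (if g = g\<^sub>0 then (ln B - s) / \<mu> g\<^sub>0 else 0)" for g
  fix x
  have "finite D"
    using D by (simp add: partition_of_unity_def)
  have "(\<Sum>g\<in>D. exp (w g) * L g x) = (\<Sum>g\<in>D. L g x)"
    using g\<^sub>0(3) by (intro sum.cong) (auto simp: w_def)
  also have "\<dots> \<le> B"
    using partition_of_unity_operator_sum[OF L D] bound(1) by simp
  also have "\<dots> = exp (s + (\<Sum>g\<in>D. \<mu> g * w g))"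
    using g\<^sub>0 \<open>finite D\<close> bound(2) by (simp add: w_def if_distrib sum.delta cong: if_cong)
  finally show "(\<Sum>g\<in>D. exp (w g) * L g x) \<le> exp (s + (\<Sum>g\<in>D. \<mu> g * w g))" .
qed

lemma tau_n_less_imp_potential:
  fixes A :: "('a::topological_space \<Rightarrow> real) \<Rightarrow> ('a \<Rightarrow> real)"
  assumes "compact (UNIV :: 'a set)" "positive_operator A" "\<mu> \<in> MX" "partition_of_unity D"
    and "tau_n A \<mu> k D < ereal s"
  shows "\<exists>\<phi>\<in>CX. \<forall>x. (A ^^ k) (\<lambda>x. exp (\<phi> x)) x \<le> exp (s + \<mu> \<phi>)"
proof -
  define L where "L = A ^^ k"
  have L: "positive_operator L"
    unfolding L_def using positive_operator_funpow[OF assms(2)] .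
  obtain B\<^sub>0 where "\<And>x. \<bar>L (\<lambda>x. 1) x\<bar> \<le> B\<^sub>0"
    using CX_bounded[OF assms(1) positive_operator_CX[OF L CX_const]] by blast
  then have bound: "\<And>x. L (\<lambda>x. 1) x \<le> max 1 B\<^sub>0" "0 < max 1 B\<^sub>0"
    by (auto simp: abs_le_iff le_max_iff_disj)
  have tau: "tau_n A \<mu> k D = (SUP m\<in>MX. \<Sum>g\<in>D. tau_summand (\<mu> g) (m (L g)))"
    by (simp add: tau_n_def L_def)
  have "\<exists>w. \<forall>x. (\<Sum>g\<in>D. exp (w g) * L g x) \<le> exp (s + (\<Sum>g\<in>D. \<mu> g * w g))"
  proof (cases "tau_n A \<mu> k D")
    case (real s\<^sub>0)
    then show ?thesis
      using tau_sup_finite_imp_weights[OF L assms(3,4) bound(1) less_imp_le[OF bound(2)]] tau assms(5)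
      by simp
  next
    case MInf
    then obtain g where "g \<in> D" "0 < \<mu> g" "\<And>x. L g x = 0"
      using tau_sup_minf_imp_vanishing[OF L assms(3,4)] tau by metis
    then show ?thesis
      using vanishing_imp_weights[OF L assms(4) bound] by blast
  qed (use assms(5) in simp)
  then show ?thesis
    using potential_from_weights[OF _ L assms(4)] assms(3) unfolding L_def MX_def by blast
qed

section \<open>Birkhoff sums along residue classes\<close>

lemma transfer_power_exp_birkhoff_sum_le:
  fixes \<alpha> :: "'a::topological_space \<Rightarrow> 'a"
  assumes tr: "transfer_operator \<alpha> A" and cont: "continuous_on UNIV \<alpha>" and "\<phi> \<in> CX"
    and step: "\<And>x. (A ^^ k) (\<lambda>x. exp (\<phi> x)) x \<le> exp \<Lambda>"
  shows "(\<lambda>y. exp (\<Sum>i<j. \<phi> ((\<alpha> ^^ (i * k)) y))) \<in> CX \<and>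
    (\<forall>x. (A ^^ (j * k)) (\<lambda>y. exp (\<Sum>i<j. \<phi> ((\<alpha> ^^ (i * k)) y))) x \<le> exp (real j * \<Lambda>))"
proof (induction j)
  case 0
  then show ?case by simp
next
  case (Suc j)
  define G where "G y = exp (\<Sum>i<j. \<phi> ((\<alpha> ^^ (i * k)) y))" for y
  have G: "G \<in> CX" "\<And>x. (A ^^ (j * k)) G x \<le> exp (real j * \<Lambda>)" "\<And>y. 0 \<le> G y"
    using Suc unfolding G_def by auto
  have A_pow: "positive_operator (A ^^ p)" for p
    using transfer_operator_funpow_positive[OF tr] .
  have split: "(\<lambda>y. exp (\<Sum>i<Suc j. \<phi> ((\<alpha> ^^ (i * k)) y))) = (\<lambda>y. G ((\<alpha> ^^ k) y) * exp (\<phi> y))"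
  proof
    fix y
    have shift: "(\<alpha> ^^ (Suc i * k)) y = (\<alpha> ^^ (i * k)) ((\<alpha> ^^ k) y)" for i
      by (simp only: mult_Suc add.commute[of k] funpow_add comp_def)
    have "(\<Sum>i<Suc j. \<phi> ((\<alpha> ^^ (i * k)) y)) = \<phi> y + (\<Sum>i<j. \<phi> ((\<alpha> ^^ (Suc i * k)) y))"
      by (subst sum.lessThan_Suc_shift) simp
    also have "\<dots> = \<phi> y + (\<Sum>i<j. \<phi> ((\<alpha> ^^ (i * k)) ((\<alpha> ^^ k) y)))"
      by (simp only: shift)
    finally show "exp (\<Sum>i<Suc j. \<phi> ((\<alpha> ^^ (i * k)) y)) = G ((\<alpha> ^^ k) y) * exp (\<phi> y)"
      unfolding G_def by (simp add: exp_add mult.commute)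
  qed
  have new_CX: "(\<lambda>y. G ((\<alpha> ^^ k) y) * exp (\<phi> y)) \<in> CX"
    by (intro CX_mult CX_compose_funpow[OF cont G(1)] CX_exp \<open>\<phi> \<in> CX\<close>)
  have pulled: "(A ^^ k) (\<lambda>y. G ((\<alpha> ^^ k) y) * exp (\<phi> y)) = (\<lambda>y. G y * (A ^^ k) (\<lambda>x. exp (\<phi> x)) y)"
    by (rule transfer_operator_funpow[OF tr cont G(1) CX_exp[OF \<open>\<phi> \<in> CX\<close>]])
  have pulled_CX: "(\<lambda>y. G y * (A ^^ k) (\<lambda>x. exp (\<phi> x)) y) \<in> CX"
    using positive_operator_CX[OF A_pow new_CX, of k] unfolding pulled .
  have "(A ^^ (Suc j * k)) (\<lambda>y. G ((\<alpha> ^^ k) y) * exp (\<phi> y)) x \<le> exp (real (Suc j) * \<Lambda>)" for x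
  proof -
    have "(A ^^ (Suc j * k)) (\<lambda>y. G ((\<alpha> ^^ k) y) * exp (\<phi> y)) x
        = (A ^^ (j * k)) (\<lambda>y. G y * (A ^^ k) (\<lambda>x. exp (\<phi> x)) y) x"
      by (simp only: mult_Suc add.commute[of k] funpow_add comp_def pulled)
    also have "\<dots> \<le> (A ^^ (j * k)) (\<lambda>y. exp \<Lambda> * G y) x"
      using step G(3)
      by (intro positive_operator_mono[OF A_pow pulled_CX CX_cmult[OF G(1)]])
        (auto simp: mult.commute mult_left_mono)
    also have "\<dots> = exp \<Lambda> * (A ^^ (j * k)) G x"
      using positive_operator_cmult[OF A_pow G(1)] by simp
    also have "\<dots> \<le> exp \<Lambda> * exp (real j * \<Lambda>)"
      using G(2) by simp
    also have "\<dots> = exp (real (Suc j) * \<Lambda>)"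
      by (simp add: exp_add[symmetric] algebra_simps)
    finally show ?thesis .
  qed
  then show ?case
    using new_CX unfolding split by simp
qed

lemma sum_residue_classes:
  fixes g :: "nat \<Rightarrow> 'b::comm_monoid_add"
  shows "(\<Sum>r<k. \<Sum>i<N. g (r + i * k)) = (\<Sum>m<N * k. g m)"
proof -
  have "(\<Sum>m<N * k. g m) = (\<Sum>i<N. sum g {i * k..<i * k + k})"
    using sum.nat_group[of g k N] by simp
  also have "\<dots> = (\<Sum>i<N. \<Sum>r<k. g (r + i * k))"
  proof (rule sum.cong[OF refl])
    fix i
    have "sum g {0 + i * k..<k + i * k} = (\<Sum>r\<in>{0..<k}. g (r + i * k))"
      by (rule sum.shift_bounds_nat_ivl)
    then show "sum g {i * k..<i * k + k} = (\<Sum>r<k. g (r + i * k))"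
      by (simp add: add.commute atLeast0LessThan)
  qed
  also have "\<dots> = (\<Sum>r<k. \<Sum>i<N. g (r + i * k))"
    by (rule sum.swap)
  finally show ?thesis by simp
qed

lemma exists_residue_class_sum_ge:
  fixes g :: "nat \<Rightarrow> real"
  assumes "0 < k" "N * k \<le> n" "n \<le> N * k + 2 * k"
    and bounded: "\<And>i. \<bar>g i\<bar> \<le> M" and large: "real n * c < (\<Sum>i<n. g i)"
  obtains r where "r < k" "real N * c - 2 * (\<bar>c\<bar> + M) \<le> (\<Sum>i<N. g (r + i * k))"
proof -
  define W where "W = 2 * (\<bar>c\<bar> + M)"
  define d where "d = real (n - N * k)"
  have "real (N * k) \<le> real n" "real n \<le> real (N * k + 2 * k)"
    using assms(2,3) by (simp only: of_nat_le_iff)+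
  then have d: "0 \<le> d" "d \<le> 2 * real k" "real n = d + real N * real k"
    using assms(2) by (auto simp: d_def of_nat_diff)
  have "0 \<le> M"
    using bounded[of 0] by simp
  have "(\<Sum>i<n. g i) = (\<Sum>i<N * k. g i) + (\<Sum>i\<in>{N * k..<n}. g i)"
    using sum.atLeastLessThan_concat[of 0 "N * k" n g] assms(2) by (simp add: atLeast0LessThan)
  moreover have "(\<Sum>i\<in>{N * k..<n}. g i) \<le> d * M"
    using sum_bounded_above[of "{N * k..<n}" g M] bounded by (auto simp: d_def abs_le_iff)
  moreover have "(\<Sum>r<k. (\<Sum>i<N. g (r + i * k)) - real N * c) = (\<Sum>i<N * k. g i) - real k * real N * c"
    by (simp add: sum_subtractf sum_residue_classes)
  ultimately have "d * (c - M) < (\<Sum>r<k. (\<Sum>i<N. g (r + i * k)) - real N * c)"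
    using large d(3) by (simp add: algebra_simps)
  moreover have "- (real k * W) \<le> d * (c - M)"
  proof -
    have "2 * real k * (- (\<bar>c\<bar> + M)) \<le> d * (- (\<bar>c\<bar> + M))"
      using d(2) \<open>0 \<le> M\<close> by (intro mult_right_mono_neg) auto
    also have "\<dots> \<le> d * (c - M)"
      using d(1) by (intro mult_left_mono) auto
    finally show ?thesis
      unfolding W_def by (simp add: algebra_simps)
  qed
  ultimately have total: "(\<Sum>r<k. - W) < (\<Sum>r<k. (\<Sum>i<N. g (r + i * k)) - real N * c)"
    by simp
  obtain r where "r < k" "- W < (\<Sum>i<N. g (r + i * k)) - real N * c"
  proof (rule ccontr)
    note found = that
    assume "\<not> thesis"
    then have "(\<Sum>i<N. g (r + i * k)) - real N * c \<le> - W" if "r < k" for r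
      using found[of r] that not_less by blast
    then have "(\<Sum>r<k. (\<Sum>i<N. g (r + i * k)) - real N * c) \<le> (\<Sum>r<k. - W)"
      by (intro sum_mono) simp
    then show False
      using total by simp
  qed
  then show ?thesis
    using that unfolding W_def by simp
qed

lemma transfer_power_shifted_birkhoff_le:
  fixes \<alpha> :: "'a::topological_space \<Rightarrow> 'a"
  assumes tr: "transfer_operator \<alpha> A" and cont: "continuous_on UNIV \<alpha>" and "\<phi> \<in> CX"
    and step: "\<And>x. (A ^^ k) (\<lambda>x. exp (\<phi> x)) x \<le> exp \<Lambda>"
    and Q: "\<And>p x. p \<le> 2 * k \<Longrightarrow> (A ^^ p) (\<lambda>x. 1) x \<le> Q" "1 \<le> Q"
    and "r \<le> 2 * k" "N * k + r \<le> n" "n \<le> N * k + 2 * k"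
  shows "(A ^^ n) (\<lambda>x. exp (\<Sum>i<N. \<phi> ((\<alpha> ^^ (r + i * k)) x))) y \<le> Q^2 * exp (real N * \<Lambda>)"
proof -
  define G where "G y = exp (\<Sum>i<N. \<phi> ((\<alpha> ^^ (i * k)) y))" for y
  have G: "G \<in> CX" "\<And>x. (A ^^ (N * k)) G x \<le> exp (real N * \<Lambda>)" "\<And>y. 0 \<le> G y"
    using transfer_power_exp_birkhoff_sum_le[OF tr cont \<open>\<phi> \<in> CX\<close> step, of N] unfolding G_def by auto
  have A_pow: "positive_operator (A ^^ p)" for p
    using transfer_operator_funpow_positive[OF tr] .
  have shifted: "(\<lambda>x. exp (\<Sum>i<N. \<phi> ((\<alpha> ^^ (r + i * k)) x))) = (\<lambda>x. G ((\<alpha> ^^ r) x) * 1)"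
    unfolding G_def by (simp only: add.commute[of r] funpow_add comp_def mult_1_right)
  define s where "s = n - (N * k + r)"
  have "n = s + (N * k + r)" "s \<le> 2 * k"
    using assms(8,9) by (auto simp: s_def)
  have pulled: "(A ^^ r) (\<lambda>x. G ((\<alpha> ^^ r) x) * 1) = (\<lambda>x. G x * (A ^^ r) (\<lambda>x. 1) x)"
    by (rule transfer_operator_funpow[OF tr cont G(1) CX_const])
  have "(\<lambda>x. G ((\<alpha> ^^ r) x) * 1) \<in> CX"
    using CX_compose_funpow[OF cont G(1)] by simp
  then have pulled_CX: "(\<lambda>x. G x * (A ^^ r) (\<lambda>x. 1) x) \<in> CX"
    using positive_operator_CX[OF A_pow] unfolding pulled[symmetric] by blast
  have middle: "(A ^^ (N * k)) (\<lambda>x. G x * (A ^^ r) (\<lambda>x. 1) x) z \<le> Q * exp (real N * \<Lambda>)" for z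
  proof -
    have "(A ^^ (N * k)) (\<lambda>x. G x * (A ^^ r) (\<lambda>x. 1) x) z \<le> (A ^^ (N * k)) (\<lambda>x. Q * G x) z"
      using Q(1)[OF \<open>r \<le> 2 * k\<close>] G(3)
      by (intro positive_operator_mono[OF A_pow pulled_CX CX_cmult[OF G(1)]])
        (simp add: mult.commute[of Q] mult_left_mono)
    also have "\<dots> = Q * (A ^^ (N * k)) G z"
      using positive_operator_cmult[OF A_pow G(1)] by simp
    also have "\<dots> \<le> Q * exp (real N * \<Lambda>)"
      using G(2) Q(2) by (intro mult_left_mono) auto
    finally show ?thesis .
  qed
  have "(A ^^ n) (\<lambda>x. G ((\<alpha> ^^ r) x) * 1) y = (A ^^ s) ((A ^^ (N * k)) (\<lambda>x. G x * (A ^^ r) (\<lambda>x. 1) x)) y"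
    by (subst \<open>n = s + (N * k + r)\<close>) (simp only: funpow_add comp_def pulled)
  also have "\<dots> \<le> Q * exp (real N * \<Lambda>) * (A ^^ s) (\<lambda>x. 1) y"
    by (rule positive_operator_le_const[OF A_pow positive_operator_CX[OF A_pow pulled_CX] middle])
  also have "\<dots> \<le> Q * exp (real N * \<Lambda>) * Q"
    using Q(1)[OF \<open>s \<le> 2 * k\<close>] Q(2) by (intro mult_left_mono) auto
  finally show ?thesis
    unfolding shifted by (simp add: power2_eq_square mult.commute mult.left_commute)
qed

lemma div_minus_one_bounds:
  fixes n k :: nat
  assumes "0 < k"
  shows "(n div k - 1) * k \<le> n" "n \<le> (n div k - 1) * k + 2 * k"
    "0 < n div k - 1 \<Longrightarrow> (n div k - 1) * k + k \<le> n"
proof -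
  have "n div k * k + n mod k = n" "n mod k < k"
    using assms by simp_all
  then show "(n div k - 1) * k \<le> n" "n \<le> (n div k - 1) * k + 2 * k"
    "0 < n div k - 1 \<Longrightarrow> (n div k - 1) * k + k \<le> n"
    by (cases "n div k"; simp; linarith)+
qed

lemma div_minus_one_times_le:
  fixes n k :: nat
  assumes "0 < k"
  shows "real (n div k - 1) * b \<le> 2 * \<bar>b\<bar> + real n * (b / real k)"
proof -
  have "real ((n div k - 1) * k) \<le> real n" "real n \<le> real ((n div k - 1) * k + 2 * k)"
    using div_minus_one_bounds[OF assms, of n] by (simp only: of_nat_le_iff)+
  then have "\<bar>real (n div k - 1) - real n / real k\<bar> \<le> 2"
    using assms by (simp add: field_simps abs_le_iff)
  then have "\<bar>b * (real (n div k - 1) - real n / real k)\<bar> \<le> \<bar>b\<bar> * 2"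
    by (simp add: abs_mult mult_left_mono)
  then show ?thesis
    by (simp add: algebra_simps abs_le_iff)
qed

text \<open>Only \<open>n div k - 1\<close> blocks of length \<open>k\<close> are summed, so that for every residue \<open>r < k\<close>
  they end within the first \<open>n\<close> iterates.\<close>

definition residue_cover :: "('a \<Rightarrow> 'a) \<Rightarrow> ('a \<Rightarrow> real) \<Rightarrow> nat \<Rightarrow> nat \<Rightarrow> 'a \<Rightarrow> real" where
  "residue_cover \<alpha> \<phi> k n x = (\<Sum>r<k. exp (\<Sum>i<n div k - 1. \<phi> ((\<alpha> ^^ (r + i * k)) x)))"

lemma residue_cover_CX:
  fixes \<alpha> :: "'a::topological_space \<Rightarrow> 'a"
  assumes "continuous_on UNIV \<alpha>" "\<phi> \<in> CX"
  shows "residue_cover \<alpha> \<phi> k n \<in> CX"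
  unfolding residue_cover_def[abs_def]
  by (intro CX_sum CX_exp CX_compose_funpow[OF assms]) auto

lemma residue_cover_ge:
  assumes "0 < k" "\<And>x. \<bar>\<phi> x\<bar> \<le> M" "real n * c < (\<Sum>i<n. \<phi> ((\<alpha> ^^ i) x))"
  shows "exp (real (n div k - 1) * c - 2 * (\<bar>c\<bar> + M)) \<le> residue_cover \<alpha> \<phi> k n x"
proof -
  obtain r where "r < k" "real (n div k - 1) * c - 2 * (\<bar>c\<bar> + M) \<le> (\<Sum>i<n div k - 1. \<phi> ((\<alpha> ^^ (r + i * k)) x))"
    using exists_residue_class_sum_ge[OF \<open>0 < k\<close> div_minus_one_bounds(1,2)[OF \<open>0 < k\<close>],
        where g="\<lambda>i. \<phi> ((\<alpha> ^^ i) x)", OF assms(2,3)]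
    by blast
  then show ?thesis
    unfolding residue_cover_def
    by (intro order_trans[OF _ member_le_sum[of r]]) auto
qed

lemma transfer_power_residue_cover_le:
  fixes \<alpha> :: "'a::topological_space \<Rightarrow> 'a"
  assumes tr: "transfer_operator \<alpha> A" and cont: "continuous_on UNIV \<alpha>" and \<phi>: "\<phi> \<in> CX" and "0 < k"
    and step: "\<And>x. (A ^^ k) (\<lambda>x. exp (\<phi> x)) x \<le> exp \<Lambda>"
    and Q: "\<And>p x. p \<le> 2 * k \<Longrightarrow> (A ^^ p) (\<lambda>x. 1) x \<le> Q" "1 \<le> Q"
  shows "(A ^^ n) (residue_cover \<alpha> \<phi> k n) y \<le> real k * Q^2 * exp (real (n div k - 1) * \<Lambda>)"
proof -
  define N where "N = n div k - 1"
  have A_pow: "positive_operator (A ^^ p)" for p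
    using transfer_operator_funpow_positive[OF tr] .
  have E_CX: "(\<lambda>x. exp (\<Sum>i<N. \<phi> ((\<alpha> ^^ (r + i * k)) x))) \<in> CX" for r
    by (intro CX_exp CX_sum CX_compose_funpow[OF cont \<phi>]) auto
  have term_le: "(A ^^ n) (\<lambda>x. exp (\<Sum>i<N. \<phi> ((\<alpha> ^^ (r + i * k)) x))) y \<le> Q^2 * exp (real N * \<Lambda>)"
    if "r < k" for r
  proof (cases "N = 0")
    case True
    then have "(A ^^ n) (\<lambda>x. exp (\<Sum>i<N. \<phi> ((\<alpha> ^^ (r + i * k)) x))) y \<le> Q"
      using Q(1)[of n] div_minus_one_bounds(2)[OF \<open>0 < k\<close>, of n] by (simp add: N_def)
    also have "\<dots> \<le> Q^2"
      using Q(2) by (simp add: power2_eq_square)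
    finally show ?thesis
      using True by simp
  next
    case False
    then show ?thesis
      using div_minus_one_bounds[OF \<open>0 < k\<close>, of n] that Q unfolding N_def
      by (intro transfer_power_shifted_birkhoff_le[OF tr cont \<phi> step]) auto
  qed
  have "(A ^^ n) (residue_cover \<alpha> \<phi> k n) y = (\<Sum>r<k. (A ^^ n) (\<lambda>x. exp (\<Sum>i<N. \<phi> ((\<alpha> ^^ (r + i * k)) x))) y)"
    unfolding residue_cover_def[abs_def] N_def[symmetric]
    by (simp add: positive_operator_sum[OF A_pow finite_lessThan E_CX])
  also have "\<dots> \<le> (\<Sum>r<k. Q^2 * exp (real N * \<Lambda>))"
    using term_le by (intro sum_mono) auto
  finally show ?thesis
    by (simp add: N_def)
qed

section \<open>Covering estimates\<close>

definition cover_rate ::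
  "('a::topological_space \<Rightarrow> 'a) \<Rightarrow> (('a \<Rightarrow> real) \<Rightarrow> ('a \<Rightarrow> real)) \<Rightarrow> (('a \<Rightarrow> real) \<Rightarrow> real) \<Rightarrow> real \<Rightarrow> bool"
  where "cover_rate \<alpha> A \<mu> r \<longleftrightarrow> (\<exists>U C chi. weak_star_nhd \<mu> U \<and>
    (\<forall>n\<ge>1. chi n \<in> CX \<and> (\<forall>x. indicator (Xn \<alpha> n U) x \<le> chi n x)) \<and>
    (\<forall>n\<ge>1. supnorm ((A ^^ n) (chi n)) \<le> C * exp (real n * r)))"

lemma potential_imp_cover_rate:
  fixes \<alpha> :: "'a::topological_space \<Rightarrow> 'a"
  assumes cpt: "compact (UNIV :: 'a set)" and tr: "transfer_operator \<alpha> A"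
    and cont: "continuous_on UNIV \<alpha>" and \<mu>: "\<mu> \<in> MX" and \<phi>: "\<phi> \<in> CX" and "0 < k"
    and step: "\<And>x. (A ^^ k) (\<lambda>x. exp (\<phi> x)) x \<le> exp \<Lambda>" and "0 < \<eta>"
  shows "cover_rate \<alpha> A \<mu> ((\<Lambda> - \<mu> \<phi> + \<eta>) / real k)"
proof -
  have A_pow: "positive_operator (A ^^ p)" for p
    using transfer_operator_funpow_positive[OF tr] .
  obtain M where M: "\<And>x. \<bar>\<phi> x\<bar> \<le> M"
    using CX_bounded[OF cpt \<phi>] by blast
  obtain Q where Q: "1 \<le> Q" "\<And>p x. p \<le> 2 * k \<Longrightarrow> (A ^^ p) (\<lambda>x. 1) x \<le> Q"
    using positive_operator_powers_bounded[OF cpt transfer_operator_positive[OF tr]] by metis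
  define c where "c = \<mu> \<phi> - \<eta>"
  define W where "W = 2 * (\<bar>c\<bar> + M)"
  define \<beta> where "\<beta> = \<Lambda> - c"
  define C where "C = exp W * real k * Q^2 * exp (2 * \<bar>\<beta>\<bar>)"
  define chi where "chi n x = exp (W - real (n div k - 1) * c) * residue_cover \<alpha> \<phi> k n x" for n x
  define U where "U = {\<nu>\<in>MX. \<forall>f\<in>{\<phi>}. \<bar>\<nu> f - \<mu> f\<bar> < \<eta>}"
  have chi_CX: "chi n \<in> CX" for n
    using CX_cmult[OF residue_cover_CX[OF cont \<phi>]] unfolding chi_def[abs_def] .
  have chi_nonneg: "0 \<le> chi n x" for n x
    unfolding chi_def residue_cover_def by (intro mult_nonneg_nonneg sum_nonneg) auto
  have "indicator (Xn \<alpha> n U) x \<le> chi n x" if "1 \<le> n" for n x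
  proof (cases "x \<in> Xn \<alpha> n U")
    case True
    then have "real n * c < (\<Sum>i<n. \<phi> ((\<alpha> ^^ i) x))"
      using that unfolding Xn_def U_def empirical_def c_def by (simp add: abs_less_iff field_simps)
    then have "exp (real (n div k - 1) * c - W) \<le> residue_cover \<alpha> \<phi> k n x"
      unfolding W_def by (rule residue_cover_ge[OF \<open>0 < k\<close> M])
    then have "exp (W - real (n div k - 1) * c) * exp (real (n div k - 1) * c - W)
        \<le> exp (W - real (n div k - 1) * c) * residue_cover \<alpha> \<phi> k n x"
      by (rule mult_left_mono) simp
    then have "1 \<le> exp (W - real (n div k - 1) * c) * residue_cover \<alpha> \<phi> k n x"
      by (simp add: exp_add[symmetric])
    then show ?thesis
      using True by (simp add: chi_def)
  qed (simp add: chi_nonneg)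
  moreover have "supnorm ((A ^^ n) (chi n)) \<le> C * exp (real n * (\<beta> / real k))" for n
  proof (rule supnorm_le)
    show "0 \<le> (A ^^ n) (chi n) y" for y
      by (rule positive_operator_nonneg[OF A_pow chi_CX chi_nonneg])
    fix y
    have "(A ^^ n) (chi n) y = exp (W - real (n div k - 1) * c) * (A ^^ n) (residue_cover \<alpha> \<phi> k n) y"
      unfolding chi_def[abs_def] by (simp add: positive_operator_cmult[OF A_pow residue_cover_CX[OF cont \<phi>]])
    also have "\<dots> \<le> exp (W - real (n div k - 1) * c) * (real k * Q^2 * exp (real (n div k - 1) * \<Lambda>))"
      using transfer_power_residue_cover_le[OF tr cont \<phi> \<open>0 < k\<close> step Q(2,1)] by (intro mult_left_mono) auto
    also have "\<dots> = exp W * real k * Q^2 * exp (real (n div k - 1) * \<beta>)"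
      by (simp add: \<beta>_def exp_diff exp_add[symmetric] algebra_simps)
    also have "\<dots> \<le> exp W * real k * Q^2 * exp (2 * \<bar>\<beta>\<bar> + real n * (\<beta> / real k))"
      using div_minus_one_times_le[OF \<open>0 < k\<close>, of n \<beta>] by (intro mult_left_mono) auto
    finally show "(A ^^ n) (chi n) y \<le> C * exp (real n * (\<beta> / real k))"
      by (simp add: C_def exp_add mult.assoc)
  qed
  moreover have "weak_star_nhd \<mu> U"
    unfolding weak_star_nhd_def U_def using \<phi> \<open>0 < \<eta>\<close> by (intro exI[of _ "{\<phi>}"] exI[of _ \<eta>]) auto
  moreover have "\<Lambda> - \<mu> \<phi> + \<eta> = \<beta>"
    by (simp add: \<beta>_def c_def)
  ultimately show ?thesis
    unfolding cover_rate_def using chi_CX by (metis (no_types, lifting))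
qed

lemma empirical_shift_diff_le:
  assumes "\<And>y. \<bar>f y\<bar> \<le> M" "0 < n"
  shows "\<bar>empirical \<alpha> x n (\<lambda>y. f (\<alpha> y)) - empirical \<alpha> x n f\<bar> \<le> 2 * M / real n"
proof -
  define g where "g i = f ((\<alpha> ^^ i) x)" for i
  have "empirical \<alpha> x n (\<lambda>y. f (\<alpha> y)) - empirical \<alpha> x n f = (g n - g 0) / real n"
    unfolding empirical_def g_def
    using sum_lessThan_telescope[of "\<lambda>i. f ((\<alpha> ^^ i) x)" n]
    by (simp add: diff_divide_distrib[symmetric] sum_subtractf)
  moreover have "\<bar>g n - g 0\<bar> \<le> 2 * M"
    using assms(1)[of "(\<alpha> ^^ n) x"] assms(1)[of x] unfolding g_def by simp
  ultimately show ?thesis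
    using assms(2) by (simp add: abs_divide divide_right_mono)
qed

lemma noninvariant_Xn_eventually_empty:
  fixes \<alpha> :: "'a::topological_space \<Rightarrow> 'a"
  assumes cpt: "compact (UNIV :: 'a set)" and cont: "continuous_on UNIV \<alpha>"
    and "\<mu> \<in> MX" "\<not> invariant_functional \<alpha> \<mu>"
  obtains U N where "weak_star_nhd \<mu> U" "\<And>n. N \<le> n \<Longrightarrow> Xn \<alpha> n U = {}"
proof -
  obtain f where f: "f \<in> CX" "\<mu> (\<lambda>x. f (\<alpha> x)) \<noteq> \<mu> f"
    using assms(3,4) unfolding invariant_functional_def by blast
  define f\<alpha> where "f\<alpha> x = f (\<alpha> x)" for x
  have f\<alpha>: "f\<alpha> \<in> CX"
    using CX_compose_funpow[OF cont f(1), of 1] unfolding f\<alpha>_def[abs_def] by simp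
  define d where "d = \<bar>\<mu> f\<alpha> - \<mu> f\<bar>"
  have "0 < d"
    using f(2) unfolding d_def f\<alpha>_def[abs_def] by simp
  obtain M where M: "\<And>x. \<bar>f x\<bar> \<le> M"
    using CX_bounded[OF cpt f(1)] by blast
  define U where "U = {\<nu>\<in>MX. \<forall>h\<in>{f, f\<alpha>}. \<bar>\<nu> h - \<mu> h\<bar> < d / 4}"
  define N where "N = nat \<lceil>4 * M / d\<rceil> + 1"
  have "weak_star_nhd \<mu> U"
    unfolding weak_star_nhd_def U_def using f(1) f\<alpha> \<open>0 < d\<close>
    by (intro exI[of _ "{f, f\<alpha>}"] exI[of _ "d / 4"]) auto
  moreover have "Xn \<alpha> n U = {}" if "N \<le> n" for n
  proof (intro equals0I)
    fix x assume "x \<in> Xn \<alpha> n U"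
    then have "\<bar>empirical \<alpha> x n f\<alpha> - \<mu> f\<alpha>\<bar> < d / 4" "\<bar>empirical \<alpha> x n f - \<mu> f\<bar> < d / 4"
      unfolding Xn_def U_def by auto
    then have "d / 2 < \<bar>empirical \<alpha> x n f\<alpha> - empirical \<alpha> x n f\<bar>"
      unfolding d_def by (simp add: abs_if split: if_splits)
    also have "\<dots> \<le> 2 * M / real n"
      using empirical_shift_diff_le[OF M, of n \<alpha> x] that unfolding f\<alpha>_def[abs_def] by (simp add: N_def)
    finally have "d * real n < 4 * M"
      using that by (simp add: N_def field_simps)
    moreover have "4 * M / d < real n"
      using that unfolding N_def by linarith
    then have "4 * M < d * real n"
      using \<open>0 < d\<close> by (simp add: divide_less_eq mult.commute)
    ultimately show False
      by simp
  qed
  ultimately show ?thesis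
    using that by blast
qed

lemma noninvariant_cover_rate:
  fixes \<alpha> :: "'a::topological_space \<Rightarrow> 'a"
  assumes cpt: "compact (UNIV :: 'a set)" and tr: "transfer_operator \<alpha> A"
    and cont: "continuous_on UNIV \<alpha>" and "\<mu> \<in> MX" "\<not> invariant_functional \<alpha> \<mu>"
  shows "cover_rate \<alpha> A \<mu> r"
proof -
  obtain U N where U: "weak_star_nhd \<mu> U" "\<And>n. N \<le> n \<Longrightarrow> Xn \<alpha> n U = {}"
    using noninvariant_Xn_eventually_empty[OF cpt cont assms(4,5)] by blast
  obtain Q where Q: "1 \<le> Q" "\<And>p x. p \<le> N \<Longrightarrow> (A ^^ p) (\<lambda>x. 1) x \<le> Q"
    using positive_operator_powers_bounded[OF cpt transfer_operator_positive[OF tr]] by metis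
  define chi where "chi n = (\<lambda>x::'a. if n < N then 1 else (0::real))" for n
  define C where "C = Q * exp (real N * \<bar>r\<bar>)"
  have "supnorm ((A ^^ n) (chi n)) \<le> C * exp (real n * r)" for n
  proof (cases "n < N")
    case True
    have "real n * \<bar>r\<bar> \<le> real N * \<bar>r\<bar>"
      using True by (intro mult_right_mono) auto
    moreover have "- (real n * \<bar>r\<bar>) \<le> real n * r"
      using abs_ge_minus_self[of "real n * r"] by (simp add: abs_mult)
    ultimately have "Q \<le> C * exp (real n * r)"
      unfolding C_def using Q(1) by (simp add: mult.assoc exp_add[symmetric])
    then show ?thesis
      using True Q(2)[of n] positive_operator_nonneg[OF transfer_operator_funpow_positive[OF tr] CX_const]
      unfolding chi_def by (intro supnorm_le) (auto intro: order_trans)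
  next
    case False
    then have "(A ^^ n) (chi n) = (\<lambda>x. 0)"
      unfolding chi_def using positive_operator_const[OF transfer_operator_funpow_positive[OF tr], where c=0] by simp
    then show ?thesis
      unfolding C_def using Q(1) by (simp add: supnorm_le)
  qed
  moreover have "indicator (Xn \<alpha> n U) x \<le> chi n x" for n x
    using U(2)[of n] unfolding chi_def by (auto simp: indicator_def)
  ultimately show ?thesis
    unfolding cover_rate_def chi_def using U(1) by (intro exI[of _ U] exI[of _ C] exI[of _ chi]) (auto simp: chi_def)
qed

lemma t_entropy_less_PInf:
  fixes \<alpha> :: "'a::topological_space \<Rightarrow> 'a"
  assumes cpt: "compact (UNIV :: 'a set)" and tr: "transfer_operator \<alpha> A"
  shows "t_entropy \<alpha> A \<mu> < \<infinity>"
proof (cases "invariant_functional \<alpha> \<mu>")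
  case True
  have A: "positive_operator A"
    using transfer_operator_positive[OF tr] .
  have "prob_functional \<mu>"
    using True by (simp add: invariant_functional_def MX_def)
  obtain B where B: "\<And>x. \<bar>A (\<lambda>x. 1) x\<bar> \<le> B"
    using CX_bounded[OF cpt positive_operator_CX[OF A CX_const]] by blast
  have tau_le: "tau_n A \<mu> 1 {\<lambda>x. 1} \<le> ereal B"
    unfolding tau_n_def
  proof (rule SUP_least)
    fix m :: "('a \<Rightarrow> real) \<Rightarrow> real"
    assume "m \<in> MX"
    then have m: "prob_functional m"
      by (simp add: MX_def)
    have "m (A (\<lambda>x. 1)) \<le> B"
      using B by (intro prob_functional_le_const[OF m positive_operator_CX[OF A CX_const]]) (simp add: abs_le_iff)
    moreover have "0 \<le> m (A (\<lambda>x. 1))"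
      using prob_functional_nonneg[OF m positive_operator_CX[OF A CX_const]] positive_operator_nonneg[OF A CX_const]
      by simp
    ultimately have "tau_summand 1 (m (A (\<lambda>x. 1))) \<le> ereal B"
      using ln_le_minus_one[of "m (A (\<lambda>x. 1))"] by (auto simp: tau_summand_def)
    then show "(\<Sum>g\<in>{\<lambda>x. 1}. tau_summand (\<mu> g) (m ((A ^^ 1) g))) \<le> ereal B"
      using prob_functional_const[OF \<open>prob_functional \<mu>\<close>, of 1] by simp
  qed
  have "t_entropy \<alpha> A \<mu> \<le> tau_n A \<mu> 1 {\<lambda>x. 1}"
    unfolding t_entropy_def using True
    by (auto intro!: INF_lower2[of 1] INF_lower simp: partition_of_unity_def one_ereal_def[symmetric])
  also note tau_le
  finally show ?thesis
    by auto
qed (simp add: t_entropy_def)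

lemma t_entropy_less_imp_cover_rate:
  fixes \<alpha> :: "'a::topological_space \<Rightarrow> 'a"
  assumes cpt: "compact (UNIV :: 'a set)" and tr: "transfer_operator \<alpha> A"
    and cont: "continuous_on UNIV \<alpha>" and \<mu>: "\<mu> \<in> MX" and less: "t_entropy \<alpha> A \<mu> < ereal r"
  shows "cover_rate \<alpha> A \<mu> r"
proof (cases "invariant_functional \<alpha> \<mu>")
  case True
  then obtain k D where "1 \<le> k" "partition_of_unity D" "tau_n A \<mu> k D / ereal (real k) < ereal r"
    using less unfolding t_entropy_def by (auto simp: INF_less_iff)
  then have "tau_n A \<mu> k D < ereal (real k * r)"
    by (simp add: ereal_divide_less_iff mult.commute)
  then obtain s where s: "tau_n A \<mu> k D < ereal s" "s < real k * r"
    by (metis dense ereal_dense2 ereal_less(2) less_ereal.simps(1) order.strict_trans)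
  then obtain \<phi> where "\<phi> \<in> CX" "\<And>x. (A ^^ k) (\<lambda>x. exp (\<phi> x)) x \<le> exp (s + \<mu> \<phi>)"
    using tau_n_less_imp_potential[OF cpt transfer_operator_positive[OF tr] \<mu> \<open>partition_of_unity D\<close>]
    by blast
  then have "cover_rate \<alpha> A \<mu> ((s + \<mu> \<phi> - \<mu> \<phi> + (real k * r - s)) / real k)"
    using s(2) \<open>1 \<le> k\<close> by (intro potential_imp_cover_rate[OF cpt tr cont \<mu>]) auto
  then show ?thesis
    using \<open>1 \<le> k\<close> by simp
qed (rule noninvariant_cover_rate[OF cpt tr cont \<mu>])

lemma ereal_less_shift:
  fixes x :: ereal
  assumes "x < \<infinity>" "0 < \<epsilon>"
  shows "x < ereal (if x = -\<infinity> then - 1 / \<epsilon> else real_of_ereal x + \<epsilon>)"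
  using assms by (cases x) auto

theorem theorem2p1:
  fixes \<alpha> :: "'a::t2_space \<Rightarrow> 'a"
    and A :: "('a \<Rightarrow> real) \<Rightarrow> ('a \<Rightarrow> real)"
  assumes "compact (UNIV :: 'a set)"
    and "continuous_on UNIV \<alpha>"
    and "transfer_operator \<alpha> A"
  shows "\<forall>\<mu>\<in>MX. \<forall>\<epsilon>>0. \<exists>U C chi.
           weak_star_nhd \<mu> U \<and>
           (\<forall>n\<ge>1. chi n \<in> CX \<and> (\<forall>x. indicator (Xn \<alpha> n U) x \<le> chi n x)) \<and>
           (\<forall>n\<ge>1. supnorm ((A ^^ n) (chi n)) \<le>
              C * exp (real n * (if t_entropy \<alpha> A \<mu> = -\<infinity> then - 1 / \<epsilon>
                                 else real_of_ereal (t_entropy \<alpha> A \<mu>) + \<epsilon>)))"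
  unfolding cover_rate_def[symmetric]
  using t_entropy_less_imp_cover_rate[OF assms(1,3,2) _ ereal_less_shift[OF t_entropy_less_PInf[OF assms(1,3)]]]
  by blast

end
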